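(* Suppose that $(\breve L,W)$ is a marked complete reflection lattice which is rationally of Coxeter type. Then $(\breve L,W)$ is of Coxeter type.
   Context: A complete lattice is a finitely generated free $\mathbb{Z}_2$-module; $\mathbb{Q}\otimes\breve L$ is a $\mathbb{Q}_2$-vector space. A reflection is an automorphism conjugate in $GL(r,\mathbb{Q}_2)$ to $\mathrm{diag}(-1,1,\dots,1)$. A complete reflection lattice is $(\breve L,W)$ with $W\subset\mathrm{Aut}(\breve L)$ finite and generated by its reflections. A marking of a reflection $\sigma$ is an equivalence class of pairs $(b,\beta)$, $b\in\breve L$, $\beta:\breve L\to\mathbb{Z}_2$ with $\sigma(x)=x+\beta(x)b$, modulo $(b,\beta)\sim(ub,u^{-1}\beta)$ for units $u\in\mathbb{Z}_2$; $(\breve L,W)$ is marked if each reflection $\sigma\in W$ is given a marking $\{(b_\sigma,\beta_\sigma)\}$ with $\{(wb_\sigma,\beta_\sigma\circ w^{-1})\}=\{(b_{w\sigma w^{-1}},\beta_{w\sigma w^{-1}})\}$ for all $w\in W$. Analogously over $\mathbb{Z}$: a reflection lattice $(L,W)$ is a free abelian group of finite rank with a finite subgroup of $\mathrm{Aut}(L)$ generated by reflections (conjugate in $GL(r,\mathbb{Q})$ to $\mathrm{diag}(-1,1,\dots,1)$), marked via classes $\pm(b,\beta)$ with $\beta:L\to\mathbb{Z}$, satisfying the same compatibility; $(\mathbb{Z}_2\otimes L,W)$ is then a marked complete reflection lattice. $(\breve L,W)$ is of Coxeter type if it is isomorphic as a marked complete reflection lattice to $(\mathbb{Z}_2\otimes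 L,W)$ for some marked reflection lattice $(L,W)$; it is rationally of Coxeter type if there is a reflection lattice $(L,W)$ such that $(\mathbb{Q}\otimes\breve L,W)$ is isomorphic (as a $\mathbb{Q}_2$-representation of $W$) to $(\mathbb{Q}_2\otimes L,W)$. *)

theory Defs
  imports "HOL-Analysis.Finite_Cartesian_Product" "HOL-Computational_Algebra.Fraction_Field"
begin

section \<open>The 2-adic integers Z_2 (inverse limit of Z/2^n Z) and Q_2 = Frac(Z_2)\<close>


definition coh2 :: "(nat \<Rightarrow> int) \<Rightarrow> bool" where
  "coh2 f \<longleftrightarrow> (\<forall>n. f (Suc n) mod 2^n = f n mod 2^n)"

definition z2rel :: "(nat \<Rightarrow> int) \<Rightarrow> (nat \<Rightarrow> int) \<Rightarrow> bool" where
  "z2rel f g \<longleftrightarrow> coh2 f \<and> coh2 g \<and> (\<forall>n. f n mod 2^n = g n mod 2^n)"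

lemma z2rel_part_equivp: "part_equivp z2rel"
proof (rule part_equivpI)
  show "\<exists>x. z2rel x x" by (rule exI[of _ "\<lambda>_. 0"]) (simp add: z2rel_def coh2_def)
  show "symp z2rel" by (auto simp: symp_def z2rel_def)
  show "transp z2rel" by (auto simp: transp_def z2rel_def)
qed

quotient_type z2 = "nat \<Rightarrow> int" / partial: z2rel
  by (rule z2rel_part_equivp)

lemma coh2_add: "coh2 f \<Longrightarrow> coh2 g \<Longrightarrow> coh2 (\<lambda>n. f n + g n)"
  unfolding coh2_def by (metis mod_add_cong)
lemma coh2_mult: "coh2 f \<Longrightarrow> coh2 g \<Longrightarrow> coh2 (\<lambda>n. f n * g n)"
  unfolding coh2_def by (metis mod_mult_cong)
lemma coh2_uminus: "coh2 f \<Longrightarrow> coh2 (\<lambda>n. - f n)"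
  unfolding coh2_def by (metis mod_minus_cong)
lemma coh2_diff: "coh2 f \<Longrightarrow> coh2 g \<Longrightarrow> coh2 (\<lambda>n. f n - g n)"
  unfolding coh2_def by (metis mod_diff_cong)

instantiation z2 :: comm_ring_1
begin
lift_definition zero_z2 :: z2 is "\<lambda>_. 0" by (simp add: z2rel_def coh2_def)
lift_definition one_z2 :: z2 is "\<lambda>_. 1" by (simp add: z2rel_def coh2_def)
lift_definition plus_z2 :: "z2 \<Rightarrow> z2 \<Rightarrow> z2" is "\<lambda>f g n. f n + g n"
  by (auto simp: z2rel_def coh2_add intro: mod_add_cong)
lift_definition times_z2 :: "z2 \<Rightarrow> z2 \<Rightarrow> z2" is "\<lambda>f g n. f n * g n"
  by (auto simp: z2rel_def coh2_mult intro: mod_mult_cong)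
lift_definition uminus_z2 :: "z2 \<Rightarrow> z2" is "\<lambda>f n. - f n"
  by (auto simp: z2rel_def coh2_uminus intro: mod_minus_cong)
lift_definition minus_z2 :: "z2 \<Rightarrow> z2 \<Rightarrow> z2" is "\<lambda>f g n. f n - g n"
  by (auto simp: z2rel_def coh2_diff intro: mod_diff_cong)
lemma z2rel_eqI: "z2rel f f \<Longrightarrow> f = g \<Longrightarrow> z2rel f g" by simp
lemma z2rel_cohD: "z2rel f f \<Longrightarrow> coh2 f" by (simp add: z2rel_def)
lemma z2rel_cohI: "coh2 f \<Longrightarrow> z2rel f f" by (simp add: z2rel_def)
lemmas z2c = coh2_add coh2_mult coh2_diff coh2_uminus z2rel_cohD z2rel_cohI
instance
proof
  fix a b c :: z2
  show "a + b + c = a + (b + c)" by transfer (rule z2rel_eqI, simp add: z2c, simp add: algebra_simps)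
  show "a + b = b + a" by transfer (rule z2rel_eqI, simp add: z2c, simp add: algebra_simps)
  show "0 + a = a" by transfer (rule z2rel_eqI, simp add: z2c, simp add: algebra_simps)
  show "- a + a = 0" by transfer (simp add: z2rel_def coh2_def)
  show "a - b = a + - b" by transfer (rule z2rel_eqI, simp add: z2c, simp add: algebra_simps)
  show "a * b * c = a * (b * c)" by transfer (rule z2rel_eqI, simp add: z2c, simp add: algebra_simps)
  show "a * b = b * a" by transfer (rule z2rel_eqI, simp add: z2c, simp add: algebra_simps)
  show "1 * a = a" by transfer (rule z2rel_eqI, simp add: z2c, simp add: algebra_simps)
  show "(a + b) * c = a * c + b * c" by transfer (rule z2rel_eqI, simp add: z2c, simp add: algebra_simps)
  show "(0::z2) \<noteq> 1" by transfer (simp add: z2rel_def coh2_def, rule exI[of _ 1], simp)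
qed
end

lemma coh2_mono: assumes "coh2 f" "m \<le> n" shows "f n mod 2^m = f m mod 2^m"
  using assms(2)
proof (induction n rule: dec_induct)
  case (step n)
  have "f (Suc n) mod 2^m = (f (Suc n) mod 2^n) mod 2^m"
    using step(1) by (simp add: mod_mod_cancel le_imp_power_dvd)
  also have "\<dots> = (f n mod 2^n) mod 2^m" using assms(1) by (simp add: coh2_def)
  also have "\<dots> = f m mod 2^m" using step by (simp add: mod_mod_cancel le_imp_power_dvd)
  finally show ?case .
qed simp

lemma pow2_dvd_mult: "\<not> (2::int)^a dvd x \<Longrightarrow> \<not> 2^b dvd y \<Longrightarrow> \<not> 2^(a+b) dvd x*y"
proof (induction a arbitrary: x)
  case 0 then show ?case by simp
next
  case (Suc a)
  show ?case
  proof (cases "even x")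
    case True
    then obtain x' where x: "x = 2*x'" by blast
    have "\<not> 2^a dvd x'" using Suc.prems(1) x by simp
    from Suc.IH[OF this Suc.prems(2)] show ?thesis using x by (simp add: mult.assoc)
  next
    case False
    then have "coprime ((2::int)^(Suc a+b)) x" by simp
    show ?thesis
    proof
    assume "2^(Suc a+b) dvd x*y"
    with \<open>coprime ((2::int)^(Suc a+b)) x\<close> have "2^(Suc a+b) dvd y" by (simp add: coprime_dvd_mult_right_iff)
    then have "2^b dvd y" by (meson dvd_trans le_add2 le_imp_power_dvd)
    with Suc.prems(2) show False by simp
    qed
  qed
qed

instance z2 :: idom
proof
  fix a b :: z2
  show "a \<noteq> 0 \<Longrightarrow> b \<noteq> 0 \<Longrightarrow> a * b \<noteq> 0"
  proof (transfer)
    fix f g assume f: "z2rel f f" "\<not> z2rel f (\<lambda>_. 0)" and g: "z2rel g g" "\<not> z2rel g (\<lambda>_. 0)"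
    from f obtain p where p: "f p mod 2^p \<noteq> 0" by (auto simp: z2rel_def coh2_def)
    from g obtain q where q: "g q mod 2^q \<noteq> 0" by (auto simp: z2rel_def coh2_def)
    have cf: "coh2 f" and cg: "coh2 g" using f g by (auto simp: z2rel_def)
    have "f (p+q) mod 2^p = f p mod 2^p" by (rule coh2_mono[OF cf]) simp
    with p have 1: "\<not> 2^p dvd f (p+q)" by (auto simp: dvd_eq_mod_eq_0)
    have "g (p+q) mod 2^q = g q mod 2^q" by (rule coh2_mono[OF cg]) simp
    with q have 2: "\<not> 2^q dvd g (p+q)" by (auto simp: dvd_eq_mod_eq_0)
    from pow2_dvd_mult[OF 1 2] show "\<not> z2rel (\<lambda>n. f n * g n) (\<lambda>_. 0)"
      by (auto simp: z2rel_def dvd_eq_mod_eq_0)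
  qed
qed


type_synonym q2 = "z2 fract"

definition embQ2 :: "z2 \<Rightarrow> q2" where "embQ2 a = Fract a 1"

text \<open>A lattice of rank r = CARD('n) is modelled (up to isomorphism) as 'a^'n, its
  endomorphisms as matrices 'a^'n^'n acting by *v, linear forms as vectors via fdot.\<close>

definition vmap :: "('a \<Rightarrow> 'b) \<Rightarrow> 'a^'n \<Rightarrow> 'b^'n" where
  "vmap f x = (\<chi> i. f (x $ i))"

definition fdot :: "'a::semiring_1^'n \<Rightarrow> 'a^'n \<Rightarrow> 'a" where
  "fdot c x = (\<Sum>i\<in>UNIV. c $ i * x $ i)"

definition refl_conj :: "'k::field^'n^'n \<Rightarrow> bool" where
  "refl_conj A \<longleftrightarrow> (\<exists>P::'k^'n^'n. invertible P \<and>
     (\<exists>i0. P ** A ** matrix_inv P = (\<chi> i j. if i = j then (if i = i0 then -1 else 1) else 0)))"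

definition z2_reflection :: "z2^'n^'n \<Rightarrow> bool" where
  "z2_reflection s \<longleftrightarrow> invertible s \<and> refl_conj (map_matrix embQ2 s)"

definition int_reflection :: "int^'n^'n \<Rightarrow> bool" where
  "int_reflection s \<longleftrightarrow> invertible s \<and> refl_conj (map_matrix (of_int :: int \<Rightarrow> rat) s)"

inductive_set gen_grp :: "('a::semiring_1^'n^'n) set \<Rightarrow> ('a^'n^'n) set" for S where
  gen_one: "mat 1 \<in> gen_grp S"
| gen_base: "s \<in> S \<Longrightarrow> s \<in> gen_grp S"
| gen_mult: "x \<in> gen_grp S \<Longrightarrow> y \<in> gen_grp S \<Longrightarrow> x ** y \<in> gen_grp S"
| gen_inv: "x \<in> gen_grp S \<Longrightarrow> invertible x \<Longrightarrow> matrix_inv x \<in> gen_grp S"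

definition refl_group :: "(('a::semiring_1^'n^'n) \<Rightarrow> bool) \<Rightarrow> ('a^'n^'n) set \<Rightarrow> bool" where
  "refl_group R W \<longleftrightarrow> finite W \<and> (\<forall>w\<in>W. invertible w) \<and> mat 1 \<in> W \<and>
     (\<forall>x\<in>W. \<forall>y\<in>W. x ** y \<in> W) \<and> (\<forall>x\<in>W. matrix_inv x \<in> W) \<and>
     W = gen_grp {s \<in> W. R s}"

definition is_marking :: "'a::comm_ring_1^'n^'n \<Rightarrow> 'a^'n \<Rightarrow> 'a^'n \<Rightarrow> bool" where
  "is_marking s b \<beta> \<longleftrightarrow> (\<forall>x. s *v x = x + fdot \<beta> x *s b)"

definition mclass :: "'a::comm_ring_1^'n \<Rightarrow> 'a^'n \<Rightarrow> (('a^'n) \<times> ('a^'n)) set" where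
  "mclass b \<beta> = {(u *s b, v *s \<beta>) | u v. u * v = 1}"

definition marking_of :: "'a::comm_ring_1^'n^'n \<Rightarrow> (('a^'n) \<times> ('a^'n)) set \<Rightarrow> bool" where
  "marking_of s C \<longleftrightarrow> (\<exists>b \<beta>. is_marking s b \<beta> \<and> C = mclass b \<beta>)"

definition is_marked :: "(('a::comm_ring_1^'n^'n) \<Rightarrow> bool) \<Rightarrow> ('a^'n^'n) set
    \<Rightarrow> ('a^'n^'n \<Rightarrow> (('a^'n) \<times> ('a^'n)) set) \<Rightarrow> bool" where
  "is_marked R W mk \<longleftrightarrow> (\<forall>s\<in>W. R s \<longrightarrow> marking_of s (mk s)) \<and>
     (\<forall>w\<in>W. \<forall>s\<in>W. R s \<longrightarrow>
        (\<lambda>(b, \<beta>). (w *v b, \<beta> v* matrix_inv w)) ` mk s = mk (w ** s ** matrix_inv w))"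

text \<open>marking of Z_2 (x) L induced from a marking (class \<open>\<pm>(b,beta)\<close>) on L\<close>
definition ext_marking :: "((int^'n) \<times> (int^'n)) set \<Rightarrow> ((z2^'n) \<times> (z2^'n)) set" where
  "ext_marking C = {(u *s vmap of_int b, v *s vmap of_int \<beta>) | u v b \<beta>. u * v = 1 \<and> (b, \<beta>) \<in> C}"

definition coxeter_type :: "(z2^'n^'n) set \<Rightarrow> (z2^'n^'n \<Rightarrow> ((z2^'n) \<times> (z2^'n)) set) \<Rightarrow> bool" where
  "coxeter_type W mk \<longleftrightarrow>
    (\<exists>(W'::(int^'n^'n) set) mk'. refl_group int_reflection W' \<and> is_marked int_reflection W' mk' \<and>
      (\<exists>\<Phi>::z2^'n^'n. invertible \<Phi> \<and>
         (\<lambda>w. \<Phi> ** w ** matrix_inv \<Phi>) ` W = map_matrix of_int ` W' \<and>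
         (\<forall>s\<in>W. \<forall>s'\<in>W'. z2_reflection s \<longrightarrow> map_matrix of_int s' = \<Phi> ** s ** matrix_inv \<Phi> \<longrightarrow>
            (\<lambda>(b, \<beta>). (\<Phi> *v b, \<beta> v* matrix_inv \<Phi>)) ` mk s = ext_marking (mk' s'))))"

definition rationally_coxeter :: "(z2^'n^'n) set \<Rightarrow> bool" where
  "rationally_coxeter W \<longleftrightarrow>
    (\<exists>(W'::(int^'n^'n) set). refl_group int_reflection W' \<and>
      (\<exists>P::q2^'n^'n. invertible P \<and>
         (\<lambda>w. P ** map_matrix embQ2 w ** matrix_inv P) ` W = map_matrix (\<lambda>k. embQ2 (of_int k)) ` W'))"

end

(*
  Let P over Q_2 conjugate W into an integral reflection group W'. Clearing denominators gives
  Z_2-matrices A = cP and A' with A A' = A' A = 2^v. The integral points M of A Z_2^n form a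
  W'-stable lattice with 2^v Z^n \<subseteq> M \<subseteq> Z^n; a Z-basis B of M is also a Z_2-basis of A Z_2^n,
  so U = B^-1 A lies in GL_n(Z_2) and conjugates W into GL_n(Z).

  A reflection s of W then becomes an integral matrix 1 + b \<beta>^T with \<beta>(b) = -2. Integrality
  of the entries b_k \<beta>_l forces (b, \<beta>) = (u b', u^-1 \<beta>') with b', \<beta>' integral and u a 2-adic
  unit, so the transported marking class of s contains integral points; these form a single
  class modulo +-1 because \<beta>'(b') = -2. They mark the integral reflection group U W U^-1.
*)
theory Submission
  imports Defs "HOL-Analysis.Cartesian_Space"
begin

section \<open>The ring Z_2 of 2-adic integers\<close>

lemma coh2_const: "coh2 (\<lambda>_. k)"
  by (simp add: coh2_def)

lemma z2_abs_cases: obtains f where "coh2 f" "x = abs_z2 f"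
  by (induct x rule: z2.abs_induct) (auto simp: z2rel_def)

lemma z2_abs_eq_iff:
  assumes "coh2 f" "coh2 g" shows "abs_z2 f = abs_z2 g \<longleftrightarrow> (\<forall>n. f n mod 2^n = g n mod 2^n)"
  using assms Quotient_rel[OF Quotient_z2, of f g] by (simp add: z2rel_def)

lemma of_int_z2_abs: "(of_int k :: z2) = abs_z2 (\<lambda>_. k)"
proof (induction k rule: int_induct[where k = 0])
  case base
  show ?case by (simp add: zero_z2_def)
next
  case (step1 i)
  then show ?case by (simp add: one_z2_def plus_z2.abs_eq z2rel_def coh2_const)
next
  case (step2 i)
  then show ?case by (simp add: one_z2_def minus_z2.abs_eq z2rel_def coh2_const)
qed

lemma int_eq_if_mod_pow2_eq:
  fixes a b :: int assumes "\<forall>n. a mod 2^n = b mod 2^n" shows "a = b"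
proof (rule ccontr)
  assume "a \<noteq> b"
  define n where "n = nat \<bar>a - b\<bar>"
  have "(2::int)^n dvd a - b" using assms by (simp add: mod_eq_dvd_iff)
  then have "(2::int)^n \<le> \<bar>a - b\<bar>" using \<open>a \<noteq> b\<close> dvd_imp_le_int[of "a - b" "2^n"] by simp
  moreover have "int n < 2^n" using less_exp[of n] by (simp add: of_nat_less_iff[symmetric])
  ultimately show False unfolding n_def by simp
qed

instance z2 :: ring_char_0
proof
  show "inj (of_nat :: nat \<Rightarrow> z2)"
  proof (rule injI)
    fix x y assume "(of_nat x :: z2) = of_nat y"
    then have "(of_int (int x) :: z2) = of_int (int y)" by simp
    then have "abs_z2 (\<lambda>_. int x) = abs_z2 (\<lambda>_. int y)" by (simp only: of_int_z2_abs)
    then have "\<forall>n. int x mod 2^n = int y mod 2^n"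
      by (rule z2_abs_eq_iff[OF coh2_const coh2_const, THEN iffD1])
    then have "int x = int y" by (rule int_eq_if_mod_pow2_eq)
    then show "x = y" by simp
  qed
qed

lemma z2_pow2_mult_abs:
  assumes "coh2 g" shows "(2::z2)^N * abs_z2 g = abs_z2 (\<lambda>n. 2^N * g n)"
proof -
  have "(2::z2)^N = abs_z2 (\<lambda>_. 2^N)" using of_int_z2_abs[of "2^N"] by simp
  then show ?thesis using assms by (simp add: times_z2.abs_eq z2rel_def coh2_const)
qed

lemma z2_pow2_dvd_abs_iff:
  assumes f: "coh2 f" shows "(2::z2)^N dvd abs_z2 f \<longleftrightarrow> 2^N dvd f N"
proof
  assume "2^N dvd abs_z2 f"
  then obtain y where y: "abs_z2 f = 2^N * y" by blast
  obtain g where g: "coh2 g" "y = abs_z2 g" by (rule z2_abs_cases)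
  have "abs_z2 f = abs_z2 (\<lambda>n. 2^N * g n)"
    unfolding y g(2) z2_pow2_mult_abs[OF g(1)] ..
  then have "f N mod 2^N = (2^N * g N) mod 2^N"
    using z2_abs_eq_iff[OF f coh2_mult[OF coh2_const g(1)]] by blast
  then show "2^N dvd f N" by (simp add: dvd_eq_mod_eq_0)
next
  assume dvd: "2^N dvd f N"
  define g where "g n = f (n + N) div 2^N" for n
  have fg: "f (n + N) = 2^N * g n" for n
  proof -
    have "f (n + N) mod 2^N = f N mod 2^N" by (rule coh2_mono[OF f]) simp
    with dvd show ?thesis unfolding g_def by (simp add: dvd_eq_mod_eq_0)
  qed
  have g: "coh2 g"
    unfolding coh2_def
  proof
    fix n
    have "f (Suc n + N) mod 2^(n + N) = f (n + N) mod 2^(n + N)"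
      using f unfolding coh2_def by (metis add_Suc)
    then have "(2^N * g (Suc n)) mod (2^N * 2^n) = (2^N * g n) mod (2^N * 2^n)"
      by (simp only: fg power_add mult.commute[of "2^n"])
    then have "2^N * (g (Suc n) mod 2^n) = 2^N * (g n mod 2^n)"
      by (simp only: mod_mult_mult1)
    then show "g (Suc n) mod 2^n = g n mod 2^n" by simp
  qed
  have "f n mod 2^n = (2^N * g n) mod 2^n" for n
    using coh2_mono[OF f, of n "n + N"] by (simp add: fg)
  then have "abs_z2 f = abs_z2 (\<lambda>n. 2^N * g n)"
    using z2_abs_eq_iff[OF f coh2_mult[OF coh2_const g]] by blast
  then show "(2::z2)^N dvd abs_z2 f"
    unfolding z2_pow2_mult_abs[OF g, symmetric] by simp
qed

lemma z2_pow2_dvd_of_int_iff: "(2::z2)^N dvd of_int k \<longleftrightarrow> 2^N dvd k"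
  unfolding of_int_z2_abs z2_pow2_dvd_abs_iff[OF coh2_const] ..

lemma odd_imp_z2_unit:
  assumes f: "coh2 f" and odd: "odd (f 1)" shows "abs_z2 f dvd 1"
proof -
  have coprime: "coprime (f n) (2^n)" if "n \<ge> 1" for n
  proof -
    have "f n mod 2^1 = f 1 mod 2^1" by (rule coh2_mono[OF f that])
    with odd show ?thesis by (simp add: odd_iff_mod_2_eq_one)
  qed
  have "\<exists>x. (f n * x) mod 2^n = 1 mod 2^n" for n
  proof (cases "n \<ge> 1")
    case True
    obtain u v where uv: "u * f n + v * 2^n = 1"
      using bezout_int[of "f n" "2^n"] coprime[OF True] by auto
    have "(f n * u) mod 2^n = (f n * u + v * 2^n) mod 2^n" by simp
    also have "\<dots> = 1 mod 2^n" using uv by (simp add: mult.commute)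
    finally show ?thesis by blast
  qed (rule exI[of _ 0], simp)
  then obtain g where g: "(f n * g n) mod 2^n = 1 mod 2^n" for n by metis
  have "coh2 g"
    unfolding coh2_def
  proof
    fix n
    show "g (Suc n) mod 2^n = g n mod 2^n"
    proof (cases "n \<ge> 1")
      case True
      have "(f (Suc n) * g (Suc n)) mod 2^n = 1 mod 2^n"
        using g[of "Suc n"] by (metis mod_mod_cancel le_imp_power_dvd le_SucI order_refl)
      moreover have "f (Suc n) mod 2^n = f n mod 2^n" using f by (simp add: coh2_def)
      ultimately have "(f n * g (Suc n)) mod 2^n = (f n * g n) mod 2^n"
        using g[of n] by (metis mod_mult_left_eq)
      then have "2^n dvd f n * (g (Suc n) - g n)" by (simp add: mod_eq_dvd_iff right_diff_distrib)
      then have "2^n dvd g (Suc n) - g n"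
        using coprime[OF True] by (simp add: coprime_commute coprime_dvd_mult_right_iff)
      then show ?thesis by (simp add: mod_eq_dvd_iff)
    qed (simp add: not_less_eq_eq)
  qed
  then have "abs_z2 f * abs_z2 g = abs_z2 (\<lambda>_. 1)"
    using f g by (simp add: times_z2.abs_eq z2rel_def z2_abs_eq_iff coh2_mult coh2_const)
  then show ?thesis by (metis dvdI mult.commute one_z2_def)
qed

lemma z2_unit_or_even: "x dvd (1::z2) \<or> 2 dvd x"
proof -
  obtain f where f: "coh2 f" "x = abs_z2 f" by (rule z2_abs_cases)
  show ?thesis
  proof (cases "odd (f 1)")
    case True
    then show ?thesis using odd_imp_z2_unit[OF f(1)] f(2) by simp
  next
    case False
    then have "(2::z2)^1 dvd abs_z2 f" unfolding z2_pow2_dvd_abs_iff[OF f(1)] by simp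
    then show ?thesis using f(2) by simp
  qed
qed

lemma z2_eq_0_if_all_pow2_dvd:
  fixes x :: z2 assumes "\<forall>N. 2^N dvd x" shows "x = 0"
proof -
  obtain f where f: "coh2 f" "x = abs_z2 f" by (rule z2_abs_cases)
  then have "\<forall>N. f N mod 2^N = 0 mod 2^N"
    using assms z2_pow2_dvd_abs_iff[OF f(1)] by (simp add: dvd_eq_mod_eq_0)
  then have "abs_z2 f = abs_z2 (\<lambda>_. 0)" using z2_abs_eq_iff[OF f(1) coh2_const] by blast
  then show ?thesis using f(2) by (simp add: zero_z2_def)
qed

lemma z2_pow2_times_unit:
  fixes x :: z2 assumes "x \<noteq> 0" obtains e u where "u dvd 1" "x = 2^e * u"
proof -
  obtain N where N: "\<not> 2^N dvd x" using z2_eq_0_if_all_pow2_dvd assms by blast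
  have "\<exists>e u. u dvd 1 \<and> x = 2^e * u" if "\<not> 2^N dvd x" for x :: z2
    using that
  proof (induction N arbitrary: x)
    case (Suc N)
    show ?case
    proof (cases "x dvd 1")
      case True
      then show ?thesis by (intro exI[of _ 0] exI[of _ x]) simp
    next
      case False
      then obtain y where y: "x = 2 * y" using z2_unit_or_even by blast
      then have "\<not> 2^N dvd y" using Suc.prems by (auto simp: mult.assoc)
      then obtain e u where "u dvd 1" "y = 2^e * u" using Suc.IH by blast
      then show ?thesis using y by (intro exI[of _ "Suc e"] exI[of _ u]) (simp add: mult.assoc)
    qed
  qed simp
  then show ?thesis using N that by blast
qed

lemma z2_approx_by_int: "\<exists>k y. x = of_int k + (2::z2)^N * y"
proof -
  obtain f where f: "coh2 f" "x = abs_z2 f" by (rule z2_abs_cases)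
  have "x - of_int (f N) = abs_z2 (\<lambda>n. f n - f N)"
    unfolding f(2) of_int_z2_abs using f(1) by (simp add: minus_z2.abs_eq z2rel_def coh2_const)
  moreover have "(2::z2)^N dvd abs_z2 (\<lambda>n. f n - f N)"
    using z2_pow2_dvd_abs_iff[OF coh2_diff[OF f(1) coh2_const]] by simp
  ultimately show ?thesis by (metis diff_add_cancel dvdE add.commute)
qed

section \<open>Matrices over commutative rings\<close>

lemma invertibleI: "A ** B = mat 1 \<Longrightarrow> B ** A = mat 1 \<Longrightarrow> invertible A"
  unfolding invertible_def by blast

lemma
  fixes A :: "'a::semiring_1^'n^'n"
  assumes "invertible A"
  shows matrix_inv_right: "A ** matrix_inv A = mat 1"
    and matrix_inv_left: "matrix_inv A ** A = mat 1"
proof -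
  have "\<exists>A'. A ** A' = mat 1 \<and> A' ** A = mat 1" using assms by (simp add: invertible_def)
  from someI_ex[OF this] show "A ** matrix_inv A = mat 1" "matrix_inv A ** A = mat 1"
    unfolding matrix_inv_def by auto
qed

lemma matrix_inv_unique:
  fixes A :: "'a::semiring_1^'n^'n"
  assumes AB: "A ** B = mat 1" and BA: "B ** A = mat 1" shows "matrix_inv A = B"
proof -
  have "matrix_inv A = (matrix_inv A ** A) ** B"
    using AB by (simp add: matrix_mul_assoc[symmetric])
  then show ?thesis using matrix_inv_left[OF invertibleI[OF AB BA]] by simp
qed

lemma invertible_matrix_inv:
  fixes A :: "'a::semiring_1^'n^'n"
  assumes "invertible A" shows "invertible (matrix_inv A)"
  by (rule invertibleI[OF matrix_inv_left[OF assms] matrix_inv_right[OF assms]])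

lemma matrix_inv_mult:
  fixes A B :: "'a::semiring_1^'n^'n"
  assumes A: "invertible A" and B: "invertible B"
  shows "matrix_inv (A ** B) = matrix_inv B ** matrix_inv A"
proof (rule matrix_inv_unique)
  have "A ** B ** (matrix_inv B ** matrix_inv A) = A ** (B ** matrix_inv B) ** matrix_inv A"
    by (simp only: matrix_mul_assoc)
  then show "A ** B ** (matrix_inv B ** matrix_inv A) = mat 1"
    using A B by (simp add: matrix_inv_right)
  have "matrix_inv B ** matrix_inv A ** (A ** B) = matrix_inv B ** (matrix_inv A ** A) ** B"
    by (simp only: matrix_mul_assoc)
  then show "matrix_inv B ** matrix_inv A ** (A ** B) = mat 1"
    using A B by (simp add: matrix_inv_left)
qed

lemma conj_mult_conj:
  fixes U Y :: "'a::semiring_1^'n^'n"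
  assumes "Y ** U = mat 1" shows "U ** (x ** y) ** Y = (U ** x ** Y) ** (U ** y ** Y)"
proof -
  have "(U ** x ** Y) ** (U ** y ** Y) = U ** x ** (Y ** U) ** y ** Y" by (simp add: matrix_mul_assoc)
  then show ?thesis using assms by (simp add: matrix_mul_assoc)
qed

lemma mat_mult_left: "mat c ** A = (\<chi> i j. (c::'a::comm_semiring_1) * A $ i $ j)"
  by (simp add: vec_eq_iff matrix_matrix_mult_def mat_def if_distrib[of "\<lambda>x. x * _"] cong: if_cong)

lemma mat_mult_right: "A ** mat c = (\<chi> i j. A $ i $ j * (c::'a::comm_semiring_1))"
  by (simp add: vec_eq_iff matrix_matrix_mult_def mat_def if_distrib sum.delta' cong: if_cong)

lemma mat_mult_mat: "mat (a::'a::comm_semiring_1) ** mat b = mat (a * b)"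
  unfolding mat_mult_left by (simp add: vec_eq_iff mat_def)

lemma mat_mult_commute: "mat (c::'a::comm_semiring_1) ** A = A ** mat c"
  unfolding mat_mult_left mat_mult_right by (simp add: mult.commute)

lemma mat_mult_cancel:
  fixes X Y :: "'a::idom^'n^'m"
  assumes "mat c ** X = mat c ** Y" "c \<noteq> 0" shows "X = Y"
  using assms by (simp add: mat_mult_left vec_eq_iff)

lemma matrix_vector_mult_mat: "mat (c::'a::comm_semiring_1) *v x = c *s x"
  by (simp add: vec_eq_iff matrix_vector_mult_def mat_def if_distrib[of "\<lambda>x. x * _"] cong: if_cong)

lemma matrix_vector_mult_scale: "A *v (c *s x) = c *s (A *v (x::'a::comm_semiring_1^'n))"
  by (simp add: vec_eq_iff matrix_vector_mult_def sum_distrib_left mult.left_commute)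

lemma vector_matrix_mult_scale: "(c *s x) v* A = c *s (x v* (A::'a::comm_semiring_1^'n^'m))"
  by (simp add: vec_eq_iff vector_matrix_mult_def sum_distrib_left mult.assoc)

lemma matrix_vector_mult_axis: "A *v axis i (1::'a::comm_semiring_1) = column i A"
  by (simp add: vec_eq_iff matrix_vector_mult_def axis_def column_def if_distrib[of "\<lambda>x. _ * x"] cong: if_cong)

lemma column_mat: "column j (mat (c::'a::comm_semiring_1)) = c *s axis j 1"
  by (simp add: vec_eq_iff column_def mat_def axis_def)

lemma column_matrix_mult: "column j (A ** B) = A *v column j (B::'a::comm_semiring_1^'n^'m)"
  by (simp add: vec_eq_iff column_def matrix_matrix_mult_def matrix_vector_mult_def)

lemma matrix_solve_columns:
  fixes A :: "'a::comm_semiring_1^'m^'r"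
  assumes "\<And>j. \<exists>y. A *v y = column j B" shows "\<exists>Y. A ** Y = B"
proof -
  obtain y where y: "\<forall>j. A *v y j = column j B"
    using choice[of "\<lambda>j y. A *v y = column j B"] assms by blast
  have "A ** (\<chi> r j. y j $ r) = B"
    using y by (simp add: vec_eq_iff column_def matrix_matrix_mult_def matrix_vector_mult_def)
  then show ?thesis ..
qed

lemma fdot_vector_matrix_mult: "fdot (\<beta> v* A) x = fdot \<beta> (A *v (x::'a::comm_semiring_1^'n))"
  unfolding fdot_def vector_matrix_mult_def matrix_vector_mult_def
  by (simp add: sum_distrib_left sum_distrib_right mult.assoc mult.left_commute) (rule sum.swap)

lemma fdot_scale_right: "fdot b (c *s x) = c * fdot b (x::'a::comm_semiring_1^'n)"
  by (simp add: fdot_def sum_distrib_left mult.left_commute)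

lemma fdot_scale_left: "fdot (c *s b) x = c * fdot b (x::'a::comm_semiring_1^'n)"
  by (simp add: fdot_def sum_distrib_left mult.assoc)

lemma fdot_0_right [simp]: "fdot b 0 = (0::'a::comm_semiring_1)"
  by (simp add: fdot_def)

lemma fdot_0_left [simp]: "fdot 0 b = (0::'a::comm_semiring_1)"
  by (simp add: fdot_def)

lemma vmap_nth [simp]: "vmap f x $ i = f (x $ i)"
  by (simp add: vmap_def)

lemma vmap_column: "vmap f (column j A) = column j (map_matrix f A)"
  by (simp add: vec_eq_iff column_def)

locale comm_ring_hom =
  fixes hom :: "'a::comm_ring_1 \<Rightarrow> 'b::comm_ring_1"
  assumes hom_add: "hom (x + y) = hom x + hom y"
    and hom_mult: "hom (x * y) = hom x * hom y"
    and hom_1: "hom 1 = 1"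
begin

lemma hom_0: "hom 0 = 0"
  using hom_add[of 0 0] by simp

lemma hom_uminus: "hom (- x) = - hom x"
  using hom_add[of "- x" x] by (simp add: hom_0 eq_neg_iff_add_eq_0)

lemma hom_diff: "hom (x - y) = hom x - hom y"
  using hom_add[of x "- y"] by (simp add: hom_uminus)

lemma hom_sum: "hom (sum g S) = (\<Sum>x\<in>S. hom (g x))"
  by (induction S rule: infinite_finite_induct) (auto simp: hom_0 hom_add)

lemma hom_of_int: "hom (of_int k) = of_int k"
  by (induction k rule: int_induct[where k = 0]) (simp_all add: hom_0 hom_1 hom_add hom_diff)

lemma hom_numeral: "hom (numeral k) = numeral k"
  using hom_of_int[of "numeral k"] by simp

lemma vmap_diff: "vmap hom (x - y) = vmap hom x - vmap hom y"
  by (simp add: vec_eq_iff hom_diff)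

lemma vmap_scale: "vmap hom (c *s x) = hom c *s vmap hom x"
  by (simp add: vec_eq_iff hom_mult)

lemma vmap_0: "vmap hom 0 = 0"
  by (simp add: vec_eq_iff hom_0)

lemma map_matrix_add: "map_matrix hom (A + B) = map_matrix hom A + map_matrix hom B"
  by (simp add: vec_eq_iff hom_add)

lemma map_matrix_diff: "map_matrix hom (A - B) = map_matrix hom A - map_matrix hom B"
  by (simp add: vec_eq_iff hom_diff)

lemma map_matrix_mat: "map_matrix hom (mat c) = mat (hom c)"
  by (simp add: vec_eq_iff mat_def hom_0)

lemma map_matrix_mult: "map_matrix hom (A ** B) = map_matrix hom A ** map_matrix hom B"
  by (simp add: vec_eq_iff matrix_matrix_mult_def hom_sum hom_mult)

lemma vmap_matrix_vector_mult: "vmap hom (A *v x) = map_matrix hom A *v vmap hom x"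
  by (simp add: vec_eq_iff matrix_vector_mult_def hom_sum hom_mult)

lemma vmap_vector_matrix_mult: "vmap hom (x v* A) = vmap hom x v* map_matrix hom A"
  by (simp add: vec_eq_iff vector_matrix_mult_def hom_sum hom_mult)

lemma hom_fdot: "hom (fdot a b) = fdot (vmap hom a) (vmap hom b)"
  by (simp add: fdot_def hom_sum hom_mult)

lemma map_matrix_inverse:
  fixes A :: "'a^'n^'n"
  assumes "invertible A"
  shows "invertible (map_matrix hom A)" "matrix_inv (map_matrix hom A) = map_matrix hom (matrix_inv A)"
proof -
  have "map_matrix hom A ** map_matrix hom (matrix_inv A) = mat 1"
    "map_matrix hom (matrix_inv A) ** map_matrix hom A = mat 1"
    using assms by (simp_all add: map_matrix_mult[symmetric] map_matrix_mat hom_1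
        matrix_inv_left matrix_inv_right)
  then show "invertible (map_matrix hom A)" "matrix_inv (map_matrix hom A) = map_matrix hom (matrix_inv A)"
    by (auto intro: invertibleI matrix_inv_unique)
qed

end

global_interpretation of_int_hom: comm_ring_hom "of_int :: int \<Rightarrow> 'a::comm_ring_1"
  by unfold_locales simp_all

global_interpretation embQ2_hom: comm_ring_hom embQ2
  by unfold_locales (simp_all add: embQ2_def One_fract_def)

global_interpretation of_rat_hom: comm_ring_hom "of_rat :: rat \<Rightarrow> 'a::field_char_0"
  by unfold_locales (simp_all add: of_rat_add of_rat_mult)

lemma inj_of_int_z2: "inj (of_int :: int \<Rightarrow> z2)"
  by (rule injI) simp

lemma inj_embQ2: "inj embQ2"
  by (rule injI) (simp add: embQ2_def eq_fract)

lemma embQ2_of_int: "embQ2 (of_int k) = of_int k"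
  by (rule embQ2_hom.hom_of_int)

lemma map_matrix_inj: "inj f \<Longrightarrow> map_matrix f A = map_matrix f B \<Longrightarrow> A = B"
  by (simp add: vec_eq_iff inj_eq)

lemma vmap_inj: "inj f \<Longrightarrow> vmap f x = vmap f y \<Longrightarrow> x = y"
  by (simp add: vec_eq_iff inj_eq)

section \<open>Reflections as rank-one perturbations of the identity\<close>

definition outer :: "'a::comm_semiring_1^'n \<Rightarrow> 'a^'n \<Rightarrow> 'a^'n^'n" where
  "outer b \<beta> = (\<chi> i j. b $ i * \<beta> $ j)"

lemma outer_matrix_vector_mult: "outer b \<beta> *v x = fdot \<beta> x *s b"
  by (simp add: vec_eq_iff outer_def matrix_vector_mult_def fdot_def sum_distrib_left
      sum_distrib_right mult_ac)

lemma is_marking_iff_outer: "is_marking s b \<beta> \<longleftrightarrow> s = mat 1 + outer b \<beta>"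
  unfolding is_marking_def
  by (simp add: matrix_eq matrix_vector_mult_add_rdistrib outer_matrix_vector_mult)

lemma outer_scale_units: "u * u' = (1::'a::comm_ring_1) \<Longrightarrow> outer (u *s b) (u' *s \<beta>) = outer b \<beta>"
  by (simp add: vec_eq_iff outer_def) (metis mult.assoc mult.left_commute mult_1)

lemma conj_outer:
  fixes X Xi :: "'a::comm_ring_1^'n^'n"
  assumes "X ** Xi = mat 1"
  shows "X ** (mat 1 + outer b \<beta>) ** Xi = mat 1 + outer (X *v b) (\<beta> v* Xi)"
proof -
  have "(X ** (mat 1 + outer b \<beta>) ** Xi) *v x = X *v (Xi *v x) + fdot \<beta> (Xi *v x) *s (X *v b)" for x
    by (simp add: matrix_vector_mul_assoc[symmetric] matrix_vector_mult_add_rdistrib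
        outer_matrix_vector_mult matrix_vector_right_distrib matrix_vector_mult_scale)
  then show ?thesis
    using assms by (simp add: matrix_eq matrix_vector_mul_assoc fdot_vector_matrix_mult
        matrix_vector_mult_add_rdistrib outer_matrix_vector_mult)
qed

context comm_ring_hom
begin

lemma map_matrix_outer: "map_matrix hom (outer b \<beta>) = outer (vmap hom b) (vmap hom \<beta>)"
  by (simp add: vec_eq_iff outer_def hom_mult)

end

(* Unlike refl_conj this makes sense over any commutative ring and is preserved by ring
   homomorphisms; over a field with 2 \<noteq> 0 the two notions agree. *)
definition has_refl_marking :: "'a::comm_ring_1^'n^'n \<Rightarrow> bool" where
  "has_refl_marking A \<longleftrightarrow> (\<exists>b \<beta>. A = mat 1 + outer b \<beta> \<and> fdot \<beta> b = -2)"

lemma (in comm_ring_hom) has_refl_marking_map_matrix: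
  assumes "has_refl_marking A" shows "has_refl_marking (map_matrix hom A)"
proof -
  obtain b \<beta> where A: "A = mat 1 + outer b \<beta>" "fdot \<beta> b = -2"
    using assms unfolding has_refl_marking_def by blast
  have "map_matrix hom A = mat 1 + outer (vmap hom b) (vmap hom \<beta>)"
    using A by (simp add: map_matrix_add map_matrix_mat hom_1 map_matrix_outer)
  moreover have "fdot (vmap hom \<beta>) (vmap hom b) = -2"
    using A hom_fdot[of \<beta> b] by (simp add: hom_uminus hom_numeral)
  ultimately show ?thesis unfolding has_refl_marking_def by blast
qed

lemma has_refl_marking_conj:
  fixes A X :: "'a::comm_ring_1^'n^'n"
  assumes A: "has_refl_marking A" and X: "invertible X"
  shows "has_refl_marking (X ** A ** matrix_inv X)"
proof -
  obtain b \<beta> where A: "A = mat 1 + outer b \<beta>" "fdot \<beta> b = -2"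
    using assms unfolding has_refl_marking_def by blast
  have "X ** A ** matrix_inv X = mat 1 + outer (X *v b) (\<beta> v* matrix_inv X)"
    unfolding A(1) by (rule conj_outer[OF matrix_inv_right[OF X]])
  moreover have "fdot (\<beta> v* matrix_inv X) (X *v b) = -2"
    using A(2) by (simp add: fdot_vector_matrix_mult matrix_vector_mul_assoc matrix_inv_left[OF X])
  ultimately show ?thesis unfolding has_refl_marking_def by blast
qed

definition diag_refl :: "'n \<Rightarrow> 'a::comm_ring_1^'n^'n" where
  "diag_refl i0 = (\<chi> i j. if i = j then (if i = i0 then -1 else 1) else 0)"

lemma diag_refl_matrix_vector_mult:
  "diag_refl i0 *v y = y - (2 * y $ i0) *s axis i0 (1::'a::comm_ring_1)"
  by (simp add: vec_eq_iff diag_refl_def matrix_vector_mult_def axis_def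
      if_distrib[of "\<lambda>x. x * _"] cong: if_cong)

lemma refl_conj_diag_refl:
  fixes A :: "'a::field^'n^'n"
  shows "refl_conj A \<longleftrightarrow> (\<exists>P::'a^'n^'n. invertible P \<and> (\<exists>i0. P ** A ** matrix_inv P = diag_refl i0))"
  by (simp only: refl_conj_def diag_refl_def)

lemma fdot_axis: "fdot (axis i 1) x = (x $ i :: 'a::comm_semiring_1)"
  by (simp add: fdot_def axis_def if_distrib[of "\<lambda>y. y * _"] cong: if_cong)

lemma has_refl_marking_diag_refl: "has_refl_marking (diag_refl i0 :: 'a::comm_ring_1^'n^'n)"
proof -
  have "diag_refl i0 = mat 1 + outer (axis i0 1) (-2 *s axis i0 (1::'a))"
    by (simp add: matrix_eq matrix_vector_mult_add_rdistrib outer_matrix_vector_mult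
        diag_refl_matrix_vector_mult fdot_scale_left fdot_axis) (simp add: vec_eq_iff)
  moreover have "fdot (-2 *s axis i0 1) (axis i0 1) = (-2::'a)"
    by (simp add: fdot_scale_left fdot_axis)
  ultimately show ?thesis unfolding has_refl_marking_def by blast
qed

lemma refl_conj_imp_has_refl_marking:
  fixes A :: "'a::field^'n^'n"
  assumes "refl_conj A" shows "has_refl_marking A"
proof -
  obtain P :: "'a^'n^'n" and i0 where P: "invertible P" and D: "P ** A ** matrix_inv P = diag_refl i0"
    using assms unfolding refl_conj_diag_refl by blast
  have "matrix_inv P ** diag_refl i0 ** P = (matrix_inv P ** P) ** A ** (matrix_inv P ** P)"
    unfolding D[symmetric] by (simp add: matrix_mul_assoc)
  then have "A = matrix_inv P ** diag_refl i0 ** P"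
    by (simp add: matrix_inv_left[OF P])
  also have "\<dots> = matrix_inv P ** diag_refl i0 ** matrix_inv (matrix_inv P)"
    using matrix_inv_unique[OF matrix_inv_left[OF P] matrix_inv_right[OF P]] by simp
  finally show ?thesis
    using has_refl_marking_conj[OF has_refl_marking_diag_refl invertible_matrix_inv[OF P]] by simp
qed

(* Row i0 of P is -\<beta>/2 and the other rows vanish on b, so P b = e_i0 and P maps ker \<beta>
   onto the hyperplane x_i0 = 0. *)
lemma refl_normal_form:
  fixes b \<beta> :: "'a::field^'n"
  assumes fb: "fdot \<beta> b = -2" and two: "(2::'a) \<noteq> 0" and bi0: "b $ i0 \<noteq> 0"
  defines "P \<equiv> \<chi> k j. if k = i0 then - \<beta> $ j / 2
                      else (if k = j then 1 else 0) - (if j = i0 then b $ k / b $ i0 else 0)"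
  shows "invertible P" and "P ** (mat 1 + outer b \<beta>) = diag_refl i0 ** P"
proof -
  have P: "P *v x = (\<chi> k. if k = i0 then - fdot \<beta> x / 2 else x $ k - b $ k / b $ i0 * x $ i0)" for x
    unfolding vec_eq_iff
  proof
    fix k show "(P *v x) $ k = (\<chi> k. if k = i0 then - fdot \<beta> x / 2 else x $ k - b $ k / b $ i0 * x $ i0) $ k"
      by (cases "k = i0") (simp_all add: P_def matrix_vector_mult_def fdot_def sum_divide_distrib
          sum_negf left_diff_distrib sum_subtractf if_distrib[of "\<lambda>y. y * _"] cong: if_cong)
  qed
  have "x = 0" if x: "P *v x = 0" for x
  proof -
    have xk: "x $ k = x $ i0 / b $ i0 * b $ k" for k
      using x bi0 unfolding P vec_eq_iff by (cases "k = i0") (auto dest: spec[of _ k])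
    then have "x = (x $ i0 / b $ i0) *s b"
      unfolding vec_eq_iff vector_smult_component by blast
    then have "fdot \<beta> x = x $ i0 / b $ i0 * (-2)" by (metis fb fdot_scale_right)
    moreover have "fdot \<beta> x = 0" using x two unfolding P vec_eq_iff by (auto dest: spec[of _ i0])
    ultimately have "x $ i0 = 0" using two bi0 by simp
    then have "x $ k = 0" for k using xk[of k] by simp
    then show "x = 0" by (simp add: vec_eq_iff)
  qed
  then show "invertible P"
    using invertible_left_inverse matrix_left_invertible_ker by blast
  have "(P ** (mat 1 + outer b \<beta>)) *v x = (diag_refl i0 ** P) *v x" for x
  proof -
    have "P *v b = axis i0 1"
      using bi0 two unfolding P by (simp add: vec_eq_iff axis_def fb)
    then have "(P ** (mat 1 + outer b \<beta>)) *v x = P *v x + fdot \<beta> x *s axis i0 1"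
      by (simp add: matrix_vector_mul_assoc[symmetric] matrix_vector_mult_add_rdistrib
          outer_matrix_vector_mult matrix_vector_right_distrib matrix_vector_mult_scale)
    also have "\<dots> = diag_refl i0 *v (P *v x)"
      unfolding diag_refl_matrix_vector_mult using two by (simp add: P vec_eq_iff axis_def)
    finally show ?thesis by (simp add: matrix_vector_mul_assoc)
  qed
  then show "P ** (mat 1 + outer b \<beta>) = diag_refl i0 ** P" by (simp add: matrix_eq)
qed

lemma has_refl_marking_imp_refl_conj:
  fixes A :: "'a::field^'n^'n"
  assumes "has_refl_marking A" and "(2::'a) \<noteq> 0" shows "refl_conj A"
proof -
  obtain b \<beta> where A: "A = mat 1 + outer b \<beta>" and fb: "fdot \<beta> b = -2"
    using assms unfolding has_refl_marking_def by blast
  have "b \<noteq> 0" using fb assms(2) by auto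
  then obtain i0 where "b $ i0 \<noteq> 0" by (auto simp: vec_eq_iff)
  from refl_normal_form[OF fb assms(2) this]
  obtain P :: "'a^'n^'n" where P: "invertible P" and "P ** A = diag_refl i0 ** P"
    unfolding A by blast
  then have "P ** A ** matrix_inv P = diag_refl i0"
    by (metis P matrix_inv_right matrix_mul_assoc matrix_mul_rid)
  then show ?thesis unfolding refl_conj_diag_refl using P by blast
qed

(* (b \<beta>^T)^2 = \<beta>(b) b \<beta>^T, so \<beta>(b) is determined by the matrix. *)
lemma has_refl_marking_coeff:
  fixes A :: "'a::idom^'n^'n"
  assumes "has_refl_marking A" and A: "A = mat 1 + outer b \<beta>" and two: "(2::'a) \<noteq> 0"
  shows "fdot \<beta> b = -2"
proof -
  obtain b' \<beta>' where A': "A = mat 1 + outer b' \<beta>'" and fb': "fdot \<beta>' b' = -2"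
    using assms(1) unfolding has_refl_marking_def by blast
  have sq: "outer c \<gamma> ** outer c \<gamma> = mat (fdot \<gamma> c) ** outer c \<gamma>" for c \<gamma> :: "'a^'n"
    unfolding mat_mult_left
    by (simp add: vec_eq_iff outer_def matrix_matrix_mult_def fdot_def
        sum_distrib_left sum_distrib_right mult_ac)
  have N: "outer b \<beta> = outer b' \<beta>'" using A A' by simp
  have "b' \<noteq> 0" "\<beta>' \<noteq> 0" using fb' two by auto
  then obtain i j where "b' $ i \<noteq> 0" "\<beta>' $ j \<noteq> 0" by (auto simp: vec_eq_iff)
  then have "outer b' \<beta>' $ i $ j \<noteq> 0" by (simp add: outer_def)
  moreover have "mat (fdot \<beta> b) ** outer b' \<beta>' = mat (-2) ** outer b' \<beta>'"
    using sq[of b \<beta>] sq[of b' \<beta>'] N fb' by simp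
  then have "(fdot \<beta> b + 2) * outer b' \<beta>' $ i $ j = 0"
    unfolding mat_mult_left by (simp add: vec_eq_iff distrib_right)
  ultimately show ?thesis by (simp add: eq_neg_iff_add_eq_0)
qed

section \<open>Lattices in Z^n\<close>

locale int_lattice =
  fixes M :: "(int^'n) set"
  assumes diff_mem: "x \<in> M \<Longrightarrow> y \<in> M \<Longrightarrow> x - y \<in> M" and zero_mem: "0 \<in> M"
begin

lemma uminus_mem: "x \<in> M \<Longrightarrow> - x \<in> M"
  using diff_mem[OF zero_mem] by simp

lemma add_mem: "x \<in> M \<Longrightarrow> y \<in> M \<Longrightarrow> x + y \<in> M"
  using diff_mem[of x "- y"] uminus_mem by simp

lemma scale_mem: assumes "x \<in> M" shows "t *s x \<in> M"
proof -
  have nat: "int n *s x \<in> M" for n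
    by (induction n) (auto simp: zero_mem add_mem assms vector_sadd_rdistrib)
  show ?thesis
  proof (cases "t \<ge> 0")
    case True
    then show ?thesis using nat[of "nat t"] by simp
  next
    case False
    then have "t *s x = - (int (nat (- t)) *s x)" by (simp add: vec_eq_iff)
    then show ?thesis using uminus_mem[OF nat[of "nat (- t)"]] by (simp only:)
  qed
qed

lemma sum_mem: "finite S \<Longrightarrow> (\<And>i. i \<in> S \<Longrightarrow> f i \<in> M) \<Longrightarrow> sum f S \<in> M"
  by (induction S rule: finite_induct) (auto simp: zero_mem add_mem)

lemma matrix_vector_mult_mem: assumes "\<And>i. column i B \<in> M" shows "B *v c \<in> M"
proof -
  have "B *v c = (\<Sum>i\<in>UNIV. c $ i *s column i B)"
    by (simp add: matrix_vector_column column_def Finite_Cartesian_Product.transpose_def)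
  also have "\<dots> \<in> M" by (rule sum_mem) (auto intro: scale_mem assms)
  finally show ?thesis .
qed

end

lemma int_subgroup_generator:
  fixes D :: "int set"
  assumes diff: "\<And>x y. x \<in> D \<Longrightarrow> y \<in> D \<Longrightarrow> x - y \<in> D" and K: "K \<in> D" "K > 0"
  obtains d where "d \<in> D" "d > 0" "\<And>t. t \<in> D \<Longrightarrow> d dvd t"
proof -
  have zero: "0 \<in> D" using diff[OF K(1) K(1)] by simp
  have mult: "t * x \<in> D" if "x \<in> D" for t x
  proof -
    have "int n * x \<in> D" for n
    proof (induction n)
      case (Suc n)
      show ?case using diff[OF Suc diff[OF zero that]] by (simp add: algebra_simps)
    qed (simp add: zero)
    show ?thesis
    proof (cases "t \<ge> 0")
      case True
      then show ?thesis using \<open>int (nat t) * x \<in> D\<close> by simp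
    next
      case False
      then have "t * x = 0 - int (nat (- t)) * x" by simp
      then show ?thesis using diff[OF zero \<open>int (nat (- t)) * x \<in> D\<close>] by simp
    qed
  qed
  define d where "d = int (LEAST m::nat. m > 0 \<and> int m \<in> D)"
  have "nat K > 0 \<and> int (nat K) \<in> D" using K by simp
  from LeastI[of "\<lambda>m. m > 0 \<and> int m \<in> D", OF this]
  have d: "d > 0" "d \<in> D" unfolding d_def by simp_all
  have "d dvd t" if t: "t \<in> D" for t
  proof (rule ccontr)
    assume "\<not> d dvd t"
    then have "t mod d > 0" using d(1) by (simp add: dvd_eq_mod_eq_0 order_le_neq_trans)
    moreover have "t mod d \<in> D"
      using diff[OF t mult[OF d(2), of "t div d"]] by (simp add: minus_div_mult_eq_mod)
    ultimately have "(LEAST m::nat. m > 0 \<and> int m \<in> D) \<le> nat (t mod d)"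
      by (intro Least_le) simp
    then show False using d(1) pos_mod_bound[of d t] unfolding d_def by linarith
  qed
  then show ?thesis using d that by blast
qed

lemma int_vec_pivot:
  fixes S :: "(int^'n) set"
  assumes diff: "\<And>x y. x \<in> S \<Longrightarrow> y \<in> S \<Longrightarrow> x - y \<in> S" and K: "K *s axis i 1 \<in> S" "K > 0"
  obtains v where "v \<in> S" "\<And>x. x \<in> S \<Longrightarrow> v $ i dvd x $ i"
proof -
  have "(K *s axis i 1) $ i \<in> (\<lambda>x. x $ i) ` S" using K(1) by (rule imageI)
  then have "K \<in> (\<lambda>x. x $ i) ` S" by (simp add: axis_def)
  moreover have "a - b \<in> (\<lambda>x. x $ i) ` S" if ab: "a \<in> (\<lambda>x. x $ i) ` S" "b \<in> (\<lambda>x. x $ i) ` S" for a b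
  proof -
    obtain x y where "x \<in> S" "y \<in> S" "a = x $ i" "b = y $ i" using ab by blast
    then show ?thesis using imageI[OF diff[of x y], of "\<lambda>x. x $ i"] by simp
  qed
  ultimately obtain d where "d \<in> (\<lambda>x. x $ i) ` S" "\<And>t. t \<in> (\<lambda>x. x $ i) ` S \<Longrightarrow> d dvd t"
    using int_subgroup_generator[of "(\<lambda>x. x $ i) ` S" K] K(2) by blast
  then show ?thesis using that by blast
qed

(* A triangular basis: with the coordinates enumerated by h, the i-th basis vector v i lies in M,
   vanishes at the coordinates before i, and its i-th entry divides that of every such vector. *)
lemma (in int_lattice) basis_exists:
  assumes K: "K > 0" and KM: "\<And>x. K *s x \<in> M"
  shows "\<exists>B::int^'n^'n. range ((*v) B) = M"
proof -
  obtain h :: "'n \<Rightarrow> nat" where h: "bij_betw h UNIV {..<CARD('n)}"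
    using ex_bij_betw_finite_nat[of "UNIV :: 'n set"] by (auto simp: atLeast0LessThan)
  have h_inj: "h j = h i \<Longrightarrow> j = i" for i j using h by (auto simp: bij_betw_def inj_def)
  have h_less: "h i < CARD('n)" for i using h by (auto simp: bij_betw_def)
  define S where "S k = {x \<in> M. \<forall>j. h j < k \<longrightarrow> x $ j = 0}" for k
  have S_diff: "x \<in> S k \<Longrightarrow> y \<in> S k \<Longrightarrow> t *s x - y \<in> S k" for x y k t
    unfolding S_def by (auto intro: diff_mem scale_mem)
  have "\<forall>i. \<exists>v. v \<in> S (h i) \<and> (\<forall>x\<in>S (h i). v $ i dvd x $ i)"
  proof
    fix i
    have "K *s axis i 1 \<in> S (h i)" unfolding S_def using KM by (auto simp: axis_def)
    with S_diff[of _ "h i" _ 1] K obtain v where "v \<in> S (h i)" "\<And>x. x \<in> S (h i) \<Longrightarrow> v $ i dvd x $ i"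
      by (metis int_vec_pivot vector_smult_lid)
    then show "\<exists>v. v \<in> S (h i) \<and> (\<forall>x\<in>S (h i). v $ i dvd x $ i)" by blast
  qed
  from choice[OF this]
  obtain v where "\<forall>i. v i \<in> S (h i) \<and> (\<forall>x\<in>S (h i). v i $ i dvd x $ i)" ..
  then have v: "v i \<in> S (h i)" "\<And>x. x \<in> S (h i) \<Longrightarrow> v i $ i dvd x $ i" for i by auto
  define B where "B = (\<chi> r c. v c $ r)"
  have column_B: "column i B = v i" for i by (simp add: B_def column_def vec_eq_iff)
  have "\<forall>x\<in>S k. \<exists>c. x = B *v c" if "k \<le> CARD('n)" for k
    using that
  proof (induction k rule: inc_induct)
    case base
    have "S CARD('n) = {0}"
      using h_less zero_mem unfolding S_def by (auto simp: vec_eq_iff)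
    then show ?case by (auto intro: exI[of _ 0])
  next
    case (step k)
    then have "k \<in> h ` UNIV" using h by (simp add: bij_betw_def)
    then obtain i where i: "h i = k" by blast
    show ?case
    proof
      fix x assume x: "x \<in> S k"
      have "v i $ i dvd x $ i" using v(2) x i by blast
      then obtain t where t: "x $ i = v i $ i * t" by (rule dvdE)
      have "t *s v i - x \<in> S k" using S_diff[OF v(1) x[folded i]] i by simp
      moreover have "(t *s v i - x) $ i = 0" using t by (simp add: mult.commute)
      ultimately have "t *s v i - x \<in> S (Suc k)"
        unfolding S_def using i h_inj by (auto simp: less_Suc_eq)
      then obtain c where c: "t *s v i - x = B *v c" using step.IH by blast
      have "x = t *s v i - (t *s v i - x)" by simp
      then have "x = B *v (t *s axis i 1 - c)"
        by (simp add: c matrix_vector_mult_diff_distrib matrix_vector_mult_scale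
            matrix_vector_mult_axis column_B)
      then show "\<exists>c. x = B *v c" ..
    qed
  qed
  from this[of 0] have "M \<subseteq> range ((*v) B)" unfolding S_def by auto
  moreover have "column i B \<in> M" for i using v(1)[of i] unfolding column_B S_def by blast
  then have "range ((*v) B) \<subseteq> M" using matrix_vector_mult_mem by blast
  ultimately show ?thesis by blast
qed

section \<open>Conjugating a rationally integral group into GL(n, Z) over Z_2\<close>

instance fract :: ("{idom,ring_char_0}") field_char_0
proof
  show "inj (of_nat :: nat \<Rightarrow> 'a fract)" by (rule injI) (simp add: of_nat_fract eq_fract)
qed

lemma q2_common_denominator:
  fixes S :: "q2 set" assumes "finite S"
  shows "\<exists>d. d \<noteq> 0 \<and> (\<forall>x\<in>S. \<exists>a. embQ2 d * x = embQ2 a)"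
  using assms
proof (induction S rule: finite_induct)
  case (insert x S)
  then obtain d where d: "d \<noteq> 0" "\<forall>y\<in>S. \<exists>a. embQ2 d * y = embQ2 a" by blast
  obtain a b where ab: "b \<noteq> 0" "x = Fract a b" by (cases x)
  have "embQ2 (d * b) * x = embQ2 (d * a)" using ab by (simp add: embQ2_def eq_fract)
  moreover have "\<exists>a. embQ2 (d * b) * y = embQ2 a" if y: "y \<in> S" for y
  proof -
    obtain a' where "embQ2 d * y = embQ2 a'" using bspec[OF d(2) y] by (elim exE)
    then have "embQ2 (d * b) * y = embQ2 (b * a')"
      by (simp add: embQ2_hom.hom_mult mult_ac)
    then show ?thesis by (rule exI)
  qed
  ultimately show ?case using d ab by (intro exI[of _ "d * b"]) auto
qed (intro exI[of _ 1], simp)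

lemma q2_matrix_common_denominator:
  fixes X :: "q2^'n^'m"
  obtains d A where "d \<noteq> 0" "map_matrix embQ2 A = mat (embQ2 d) ** X"
proof -
  have "finite (range (\<lambda>(i, j). X $ i $ j))" by simp
  from q2_common_denominator[OF this] obtain d where
    d: "d \<noteq> 0" "\<forall>i j. \<exists>a. embQ2 d * X $ i $ j = embQ2 a" by auto
  define A where "A = (\<chi> i j. SOME a. embQ2 d * X $ i $ j = embQ2 a)"
  have "map_matrix embQ2 A = mat (embQ2 d) ** X"
    unfolding mat_mult_left A_def using d(2) by (simp add: vec_eq_iff) (metis (mono_tags, lifting) someI_ex)
  with d(1) show ?thesis by (rule that)
qed

lemma scaled_inverse_mult:
  fixes X Y :: "'a::comm_semiring_1^'n^'n"
  assumes "X ** Y = mat 1" shows "(mat a ** X) ** (mat b ** Y) = mat (a * b)"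
proof -
  have "(mat a ** X) ** (mat b ** Y) = mat a ** ((X ** mat b) ** Y)"
    by (simp only: matrix_mul_assoc)
  also have "\<dots> = mat a ** ((mat b ** X) ** Y)"
    by (simp only: mat_mult_commute[of b X])
  also have "\<dots> = mat a ** mat b ** (X ** Y)"
    by (simp only: matrix_mul_assoc)
  finally show ?thesis using assms by (simp add: mat_mult_mat)
qed

lemma z2_scaled_inverse_of_q2_matrix:
  fixes P :: "q2^'n^'n" assumes P: "invertible P"
  obtains c A A' v where "c \<noteq> 0" "map_matrix embQ2 A = mat (embQ2 c) ** P"
    "A ** A' = mat (2^v)" "A' ** A = mat (2^v)"
proof -
  obtain c A where c: "c \<noteq> 0" and A: "map_matrix embQ2 A = mat (embQ2 c) ** P"
    by (rule q2_matrix_common_denominator)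
  obtain c' A3 where c': "c' \<noteq> 0" and A3: "map_matrix embQ2 A3 = mat (embQ2 c') ** matrix_inv P"
    by (rule q2_matrix_common_denominator)
  have "map_matrix embQ2 (A ** A3) = map_matrix embQ2 (mat (c * c'))"
    "map_matrix embQ2 (A3 ** A) = map_matrix embQ2 (mat (c * c'))"
    using scaled_inverse_mult[OF matrix_inv_right[OF P]] scaled_inverse_mult[OF matrix_inv_left[OF P]]
    by (simp_all add: embQ2_hom.map_matrix_mult embQ2_hom.map_matrix_mat embQ2_hom.hom_mult
        A A3 mult.commute)
  then have AA3: "A ** A3 = mat (c * c')" "A3 ** A = mat (c * c')"
    by (auto intro: map_matrix_inj[OF inj_embQ2])
  have "c * c' \<noteq> 0" using c c' by simp
  then obtain v u where u: "u dvd 1" "c * c' = 2^v * u" by (rule z2_pow2_times_unit)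
  then obtain u' where u': "u * u' = 1" by (auto elim: dvdE)
  have "A ** (A3 ** mat u') = mat (c * c') ** mat u'"
    using AA3 by (simp add: matrix_mul_assoc)
  moreover have "(A3 ** mat u') ** A = mat (c * c') ** mat u'"
    using AA3 by (simp only: matrix_mul_assoc[symmetric] mat_mult_commute[of u' A])
      (simp only: matrix_mul_assoc)
  moreover have "mat (c * c') ** mat u' = mat (2^v)" using u u' by (simp add: mat_mult_mat mult.assoc)
  ultimately have "A ** (A3 ** mat u') = mat (2^v)" "(A3 ** mat u') ** A = mat (2^v)" by simp_all
  with c A show ?thesis by (rule that)
qed

lemma z2_vec_approx_by_int: "\<exists>k r. q = vmap of_int k + (2::z2)^N *s r"
proof -
  have "\<forall>i. \<exists>kr. q $ i = of_int (fst kr) + 2^N * snd kr"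
    using z2_approx_by_int[of "q $ i" N for i] by auto
  from choice[OF this] obtain f where "\<forall>i. q $ i = of_int (fst (f i)) + 2^N * snd (f i)" ..
  then have "q = vmap of_int (\<chi> i. fst (f i)) + 2^N *s (\<chi> i. snd (f i))" by (simp add: vec_eq_iff)
  then show ?thesis by blast
qed

definition int_preimage :: "z2^'n^'m \<Rightarrow> (int^'m) set" where
  "int_preimage A = {x. \<exists>y. vmap of_int x = A *v y}"

lemma int_lattice_int_preimage: "int_lattice (int_preimage A)"
proof
  fix x y assume "x \<in> int_preimage A" "y \<in> int_preimage A"
  then obtain x' y' where "vmap of_int x = A *v x'" "vmap of_int y = A *v y'"
    unfolding int_preimage_def by blast
  then have "vmap of_int (x - y) = A *v (x' - y')"
    by (simp add: of_int_hom.vmap_diff matrix_vector_mult_diff_distrib)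
  then show "x - y \<in> int_preimage A" unfolding int_preimage_def by blast
next
  have "vmap of_int 0 = A *v 0" by (simp add: of_int_hom.vmap_0)
  then show "0 \<in> int_preimage A" unfolding int_preimage_def by blast
qed

lemma scale_mem_int_preimage:
  assumes "A ** A' = mat (of_int K)" shows "K *s x \<in> int_preimage A"
proof -
  have "vmap of_int (K *s x) = A *v (A' *v vmap of_int x)"
    using assms by (simp add: of_int_hom.vmap_scale matrix_vector_mul_assoc matrix_vector_mult_mat)
  then show ?thesis unfolding int_preimage_def by blast
qed

lemma intertwiner_mem_int_preimage:
  assumes "A ** w = map_matrix of_int w' ** A" and "x \<in> int_preimage A"
  shows "w' *v x \<in> int_preimage A"
proof -
  obtain y where "vmap of_int x = A *v y" using assms(2) unfolding int_preimage_def by blast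
  then have "vmap of_int (w' *v x) = A *v (w *v y)"
    using assms(1) by (simp add: of_int_hom.vmap_matrix_vector_mult matrix_vector_mul_assoc)
  then show ?thesis unfolding int_preimage_def by blast
qed

(* As 2^v Z^n lies in the lattice int_preimage A, every vector of A Z_2^n is an integral point of
   this lattice plus a vector of 2^v Z_2^n \<subseteq> B Z_2^n; so B and A span the same Z_2-lattice. *)
lemma int_preimage_basis_change:
  fixes A A' :: "z2^'n^'n" and B :: "int^'n^'n"
  assumes AA': "A ** A' = mat (2^v)" "A' ** A = mat (2^v)"
    and B: "range ((*v) B) = int_preimage A"
  obtains U Y where "U ** Y = mat 1" "Y ** U = mat 1" "A ** Y = map_matrix of_int B"
proof -
  have AA'_int: "A ** A' = mat (of_int (2^v))" using AA' by simp
  have "\<exists>y. A *v y = column j (map_matrix of_int B)" for j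
  proof -
    have "B *v axis j 1 \<in> int_preimage A" using B by blast
    then show ?thesis
      unfolding int_preimage_def by (auto simp: vmap_column matrix_vector_mult_axis)
  qed
  then obtain Y where AY: "A ** Y = map_matrix of_int B" using matrix_solve_columns by blast
  have "\<exists>g. B *v g = column j (mat (2^v))" for j
    using scale_mem_int_preimage[OF AA'_int, of "axis j 1"] unfolding B[symmetric]
    by (auto simp: column_mat)
  then obtain G where "B ** G = mat (2^v)" using matrix_solve_columns by blast
  then have BG: "map_matrix of_int B ** map_matrix of_int G = (mat (2^v) :: z2^'n^'n)"
    by (metis of_int_hom.map_matrix_mult of_int_hom.map_matrix_mat of_int_numeral of_int_power)
  have "\<exists>c. map_matrix of_int B *v c = column j A" for j
  proof -
    obtain k r where kr: "A *v axis j 1 = vmap of_int k + 2^v *s r" using z2_vec_approx_by_int by blast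
    have "vmap of_int k = A *v (axis j 1 - A' *v r)"
      using kr AA'(1) by (simp add: matrix_vector_mult_diff_distrib matrix_vector_mul_assoc matrix_vector_mult_mat)
    then obtain c where "k = B *v c" using B unfolding int_preimage_def by blast
    moreover have "2^v *s r = map_matrix of_int B *v (map_matrix of_int G *v r)"
      using BG by (simp add: matrix_vector_mul_assoc matrix_vector_mult_mat)
    ultimately have "A *v axis j 1 = map_matrix of_int B *v (vmap of_int c + map_matrix of_int G *v r)"
      using kr by (simp add: of_int_hom.vmap_matrix_vector_mult matrix_vector_right_distrib)
    then show ?thesis by (auto simp: matrix_vector_mult_axis)
  qed
  then obtain U where BU: "map_matrix of_int B ** U = A" using matrix_solve_columns by blast
  have "mat (2^v) ** (Y ** U) = mat (2^v) ** mat 1"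
    using AA'(2) AY BU by (metis matrix_mul_assoc matrix_mul_rid)
  then have YU: "Y ** U = mat 1" by (rule mat_mult_cancel) simp
  have "map_matrix embQ2 Y ** map_matrix embQ2 U = mat 1"
    using YU by (simp add: embQ2_hom.map_matrix_mult[symmetric] embQ2_hom.map_matrix_mat embQ2_hom.hom_1)
  then have "map_matrix embQ2 (U ** Y) = map_matrix embQ2 (mat 1)"
    by (simp add: matrix_left_right_inverse embQ2_hom.map_matrix_mult embQ2_hom.map_matrix_mat embQ2_hom.hom_1)
  then have "U ** Y = mat 1" by (rule map_matrix_inj[OF inj_embQ2])
  from this YU AY show ?thesis by (rule that)
qed

lemma integral_conj_via_basis:
  fixes A A' U Y w :: "z2^'n^'n" and B w' :: "int^'n^'n"
  assumes A'A: "A' ** A = mat (2^v)" and AY: "A ** Y = map_matrix of_int B"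
    and UY: "U ** Y = mat 1" and YU: "Y ** U = mat 1"
    and B: "range ((*v) B) = int_preimage A" and w: "A ** w = map_matrix of_int w' ** A"
  shows "\<exists>C. map_matrix of_int C = U ** w ** Y"
proof -
  have "\<exists>c. B *v c = column j (w' ** B)" for j
  proof -
    have "w' *v (B *v axis j 1) \<in> int_preimage A"
      using intertwiner_mem_int_preimage[OF w] B by blast
    then show ?thesis unfolding B[symmetric] by (auto simp: column_matrix_mult matrix_vector_mult_axis)
  qed
  then obtain C where BC: "B ** C = w' ** B" using matrix_solve_columns by blast
  have "A ** Y ** (U ** w ** Y) = A ** Y ** map_matrix of_int C"
  proof -
    have "A ** Y ** (U ** w ** Y) = A ** (Y ** U) ** w ** Y" by (simp add: matrix_mul_assoc)
    also have "\<dots> = map_matrix of_int w' ** (A ** Y)" using YU w by (simp add: matrix_mul_assoc)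
    also have "\<dots> = A ** Y ** map_matrix of_int C"
      using BC AY by (simp add: of_int_hom.map_matrix_mult[symmetric])
    finally show ?thesis .
  qed
  then have "mat (2^v) ** (Y ** (U ** w ** Y)) = mat (2^v) ** (Y ** map_matrix of_int C)"
    using A'A by (metis matrix_mul_assoc)
  then have "Y ** (U ** w ** Y) = Y ** map_matrix of_int C" by (rule mat_mult_cancel) simp
  then have "U ** Y ** (U ** w ** Y) = U ** Y ** map_matrix of_int C" by (simp add: matrix_mul_assoc[symmetric])
  then show ?thesis using UY by auto
qed

theorem z2_conj_integral_of_q2_conj_integral:
  fixes P :: "q2^'n^'n" and W :: "(z2^'n^'n) set"
  assumes P: "invertible P"
    and W: "\<And>w. w \<in> W \<Longrightarrow> \<exists>C. P ** map_matrix embQ2 w ** matrix_inv P = map_matrix of_int C"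
  obtains U Y :: "z2^'n^'n" where "U ** Y = mat 1" "Y ** U = mat 1"
    "\<And>w. w \<in> W \<Longrightarrow> \<exists>C. map_matrix of_int C = U ** w ** Y"
proof -
  obtain c A A' v where c: "c \<noteq> 0" and A: "map_matrix embQ2 A = mat (embQ2 c) ** P"
    and AA': "A ** A' = mat (2^v)" "A' ** A = mat (2^v)"
    using z2_scaled_inverse_of_q2_matrix[OF P] by blast
  have intertwine: "\<exists>w'. A ** w = map_matrix of_int w' ** A" if wW: "w \<in> W" for w
  proof -
    obtain C where C: "P ** map_matrix embQ2 w ** matrix_inv P = map_matrix of_int C" using W wW by blast
    have J2C: "map_matrix embQ2 (map_matrix of_int C) = map_matrix of_int C"
      by (simp add: vec_eq_iff embQ2_of_int)
    have "P ** map_matrix embQ2 w = map_matrix of_int C ** P"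
      using C[symmetric] by (simp add: matrix_mul_assoc[symmetric] matrix_inv_left[OF P])
    then have "map_matrix embQ2 (A ** w) = mat (embQ2 c) ** (map_matrix of_int C ** P)"
      by (simp add: embQ2_hom.map_matrix_mult A matrix_mul_assoc[symmetric])
    also have "\<dots> = map_matrix of_int C ** (mat (embQ2 c) ** P)"
      by (simp only: matrix_mul_assoc mat_mult_commute[of "embQ2 c" "map_matrix of_int C"])
    also have "\<dots> = map_matrix embQ2 (map_matrix of_int C ** A)"
      by (simp add: embQ2_hom.map_matrix_mult A J2C)
    finally show ?thesis by (blast intro: map_matrix_inj[OF inj_embQ2])
  qed
  have "(2::int)^v *s x \<in> int_preimage A" for x
    using scale_mem_int_preimage[of A A' "2^v"] AA' by simp
  then obtain B :: "int^'n^'n" where B: "range ((*v) B) = int_preimage A"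
    using int_lattice.basis_exists[OF int_lattice_int_preimage, of "2^v" A] by auto
  obtain U Y where UY: "U ** Y = mat 1" "Y ** U = mat 1" and AY: "A ** Y = map_matrix of_int B"
    using int_preimage_basis_change[OF AA' B] by blast
  show ?thesis
    using that[OF UY] integral_conj_via_basis[OF AA'(2) AY UY B] intertwine by blast
qed

section \<open>Integral markings\<close>

lemma int_Gcd_bezout:
  fixes c :: "'a \<Rightarrow> int" assumes "finite S"
  shows "\<exists>a. (\<Sum>k\<in>S. a k * c k) = Gcd (c ` S)"
  using assms
proof (induction S rule: finite_induct)
  case (insert k S)
  then obtain a where a: "(\<Sum>k\<in>S. a k * c k) = Gcd (c ` S)" by blast
  obtain u v where uv: "u * c k + v * Gcd (c ` S) = gcd (c k) (Gcd (c ` S))" using bezout_int by blast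
  define a' where "a' j = (if j = k then u else v * a j)" for j
  have "(\<Sum>j\<in>insert k S. a' j * c j) = u * c k + (\<Sum>j\<in>S. v * (a j * c j))"
    using insert.hyps by (simp add: a'_def mult.assoc cong: sum.cong) (auto intro!: sum.cong simp: a'_def)
  also have "\<dots> = u * c k + v * Gcd (c ` S)" by (simp add: sum_distrib_left[symmetric] a)
  finally show ?case using uv by auto
qed simp

lemma int_vec_primitive_factor:
  fixes c :: "int^'n" assumes "c \<noteq> 0"
  obtains g c0 a where "c = g *s c0" "fdot a c0 = 1"
proof -
  define G where "G = Gcd (range (\<lambda>k. c $ k))"
  obtain a where a: "(\<Sum>k\<in>UNIV. a k * c $ k) = G"
    using int_Gcd_bezout[of UNIV "\<lambda>k. c $ k"] unfolding G_def by auto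
  have G0: "G \<noteq> 0" using assms unfolding G_def by (auto simp: vec_eq_iff)
  have "G dvd c $ k" for k unfolding G_def by (rule Gcd_dvd) simp
  then have c: "c = G *s (\<chi> k. c $ k div G)" by (simp add: vec_eq_iff)
  have "G * fdot (\<chi> k. a k) (\<chi> k. c $ k div G) = G * 1"
    using a by (subst (asm) c) (simp add: fdot_def sum_distrib_left mult_ac)
  then have "fdot (\<chi> k. a k) (\<chi> k. c $ k div G) = 1" using G0 by simp
  with c show ?thesis by (rule that)
qed

lemma parallel_to_primitive:
  fixes b :: "'a::idom^'n" and c0 a :: "int^'n"
  assumes "t \<noteq> 0" and tb: "t *s b = vmap of_int (g *s c0)" and "fdot a c0 = 1"
  shows "b = fdot (vmap of_int a) b *s vmap of_int c0"
proof -
  have "t * fdot (vmap of_int a) b = of_int g"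
    using arg_cong[OF tb, of "fdot (vmap of_int a)"] assms(3)
    by (simp add: fdot_scale_right of_int_hom.vmap_scale of_int_hom.hom_fdot[symmetric])
  then have "t * b $ k = t * (fdot (vmap of_int a) b * of_int (c0 $ k))" for k
    using arg_cong[OF tb, of "\<lambda>x. x $ k"] by (simp add: mult.assoc[symmetric])
  then show ?thesis using assms(1) by (simp add: vec_eq_iff)
qed

lemma z2_int_product_split:
  fixes x y :: z2
  assumes "x \<noteq> 0" and "x * y = of_int T"
  obtains u u' k m where "u * u' = 1" "x = u * of_int k" "y = u' * of_int m"
proof -
  obtain e v where v: "v dvd 1" "x = 2^e * v" using assms(1) by (rule z2_pow2_times_unit)
  then obtain v' where vv': "v * v' = 1" by (auto elim: dvdE)
  have "(2::z2)^e dvd of_int T" using assms(2) v(2) by (metis dvd_triv_left mult.assoc)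
  then obtain T' where T': "T = 2^e * T'" unfolding z2_pow2_dvd_of_int_iff by (auto elim: dvdE)
  have "(2::z2)^e * (v * y) = 2^e * of_int T'" using assms(2) v(2) T' by (simp add: mult.assoc)
  then have "v * y = of_int T'" by simp
  then have "y = v' * of_int T'" using vv' by (metis mult.assoc mult.commute mult_1)
  moreover have "x = v * of_int (2^e)" using v(2) by (simp add: mult.commute)
  ultimately show ?thesis using vv' that by blast
qed

(* A column and a row of E through a nonzero entry are integral multiples of b and \<beta>; after
   dividing out their contents, the two leftover scalars have an integral product. *)
lemma integral_outer_factor:
  fixes E :: "int^'n^'n" and b \<beta> :: "z2^'n"
  assumes E: "map_matrix of_int E = outer b \<beta>" and "b \<noteq> 0" "\<beta> \<noteq> 0"
  obtains u u' b' \<beta>' where "u * u' = 1" "b = u *s vmap of_int b'" "\<beta> = u' *s vmap of_int \<beta>'"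
proof -
  have Ekl: "of_int (E $ k $ l) = b $ k * \<beta> $ l" for k l
    using arg_cong[OF E, of "\<lambda>M. M $ k $ l"] by (simp add: outer_def)
  obtain i j where bi: "b $ i \<noteq> 0" and \<beta>j: "\<beta> $ j \<noteq> 0" using assms(2,3) by (auto simp: vec_eq_iff)
  have "E $ i $ j \<noteq> 0" using Ekl[of i j] bi \<beta>j by auto
  then have "(\<chi> k. E $ k $ j) \<noteq> 0" "(\<chi> l. E $ i $ l) \<noteq> 0" by (auto simp: vec_eq_iff)
  obtain g c a where c: "(\<chi> k. E $ k $ j) = g *s c" "fdot a c = 1"
    using \<open>(\<chi> k. E $ k $ j) \<noteq> 0\<close> by (rule int_vec_primitive_factor)
  obtain g' r a' where r: "(\<chi> l. E $ i $ l) = g' *s r" "fdot a' r = 1"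
    using \<open>(\<chi> l. E $ i $ l) \<noteq> 0\<close> by (rule int_vec_primitive_factor)
  have "\<beta> $ j *s b = vmap of_int (g *s c)" "b $ i *s \<beta> = vmap of_int (g' *s r)"
    unfolding c(1)[symmetric] r(1)[symmetric] by (simp_all add: vec_eq_iff Ekl mult.commute)
  then have b: "b = fdot (vmap of_int a) b *s vmap of_int c"
    and \<beta>: "\<beta> = fdot (vmap of_int a') \<beta> *s vmap of_int r"
    using parallel_to_primitive \<beta>j bi c(2) r(2) by blast+
  have "fdot (vmap of_int a) b \<noteq> 0" using b assms(2) by auto
  moreover have "fdot (vmap of_int a) b * fdot (vmap of_int a') \<beta>
      = of_int (\<Sum>k\<in>UNIV. \<Sum>l\<in>UNIV. a $ k * a' $ l * E $ k $ l)"
    by (simp add: fdot_def sum_product Ekl mult_ac) (rule sum.swap)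
  ultimately obtain u u' k m where u: "u * u' = 1"
    and "fdot (vmap of_int a) b = u * of_int k" "fdot (vmap of_int a') \<beta> = u' * of_int m"
    by (rule z2_int_product_split)
  then have "b = u *s vmap of_int (k *s c)" "\<beta> = u' *s vmap of_int (m *s r)"
    using b \<beta> by (simp_all add: of_int_hom.vmap_scale vector_smult_assoc)
  with u show ?thesis by (rule that)
qed

lemma z2_unit_of_even_ints:
  fixes u u' :: z2
  assumes "u * u' = 1" "2 * u = of_int m" "2 * u' = of_int m'"
  shows "u = 1 \<or> u = -1"
proof -
  have int: "\<exists>t. x = of_int t" if "2 * x = of_int k" for x :: z2 and k
  proof -
    have "(2::z2)^1 dvd of_int k" using that by (metis dvd_triv_left power_one_right)
    then obtain t where "k = 2 * t" unfolding z2_pow2_dvd_of_int_iff by auto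
    then show ?thesis using that by auto
  qed
  obtain t t' where "u = of_int t" "u' = of_int t'" using int assms(2,3) by blast
  then have "t * t' = 1" using assms(1) by (metis of_int_1 of_int_eq_iff of_int_mult)
  then have "t = 1 \<or> t = -1" by (rule pos_zmult_eq_1_iff_lemma)
  then show ?thesis using \<open>u = of_int t\<close> by auto
qed

definition conj_marking :: "'a::comm_ring_1^'n^'n \<Rightarrow> (('a^'n) \<times> ('a^'n)) set \<Rightarrow> (('a^'n) \<times> ('a^'n)) set" where
  "conj_marking X S = (\<lambda>(b, \<beta>). (X *v b, \<beta> v* matrix_inv X)) ` S"

lemma conj_marking_mclass: "conj_marking X (mclass b \<beta>) = mclass (X *v b) (\<beta> v* matrix_inv X)"
proof
  show "conj_marking X (mclass b \<beta>) \<subseteq> mclass (X *v b) (\<beta> v* matrix_inv X)"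
    unfolding conj_marking_def mclass_def
    by (auto simp: matrix_vector_mult_scale vector_matrix_mult_scale) blast
  show "mclass (X *v b) (\<beta> v* matrix_inv X) \<subseteq> conj_marking X (mclass b \<beta>)"
  proof
    fix p assume "p \<in> mclass (X *v b) (\<beta> v* matrix_inv X)"
    then obtain u v where p: "p = (X *v (u *s b), (v *s \<beta>) v* matrix_inv X)" "u * v = 1"
      unfolding mclass_def by (auto simp: matrix_vector_mult_scale vector_matrix_mult_scale)
    then have "(u *s b, v *s \<beta>) \<in> mclass b \<beta>" unfolding mclass_def by blast
    then show "p \<in> conj_marking X (mclass b \<beta>)" unfolding conj_marking_def p(1) by force
  qed
qed

lemma conj_marking_mult:
  fixes A B :: "'a::comm_ring_1^'n^'n"
  assumes "invertible A" "invertible B"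
  shows "conj_marking A (conj_marking B S) = conj_marking (A ** B) S"
  unfolding conj_marking_def image_image using matrix_inv_mult[OF assms]
  by (simp add: matrix_vector_mul_assoc vector_matrix_mul_assoc case_prod_unfold)

lemma mclass_scale_units:
  assumes "u * u' = (1::'a::comm_ring_1)" shows "mclass (u *s b) (u' *s \<beta>) = mclass b \<beta>"
proof -
  have sub: "mclass (u *s b) (u' *s \<beta>) \<subseteq> mclass b \<beta>" if "u * u' = 1" for u u' :: 'a and b \<beta>
  proof
    fix p assume "p \<in> mclass (u *s b) (u' *s \<beta>)"
    then obtain s t where "p = ((s * u) *s b, (t * u') *s \<beta>)" "s * t = 1"
      unfolding mclass_def by (auto simp: vector_smult_assoc)
    moreover have "(s * u) * (t * u') = 1" using calculation(2) that by (simp add: mult_ac)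
    ultimately show "p \<in> mclass b \<beta>" unfolding mclass_def by blast
  qed
  have "mclass b \<beta> = mclass (u' *s (u *s b)) (u *s (u' *s \<beta>))"
    using assms by (simp add: vector_smult_assoc mult.commute)
  also have "\<dots> \<subseteq> mclass (u *s b) (u' *s \<beta>)" by (rule sub) (simp add: assms mult.commute)
  finally show ?thesis using sub[OF assms] by blast
qed

lemma ext_marking_mclass:
  "ext_marking (mclass b \<beta>) = mclass (vmap of_int b) (vmap of_int \<beta>)"
proof
  show "ext_marking (mclass b \<beta>) \<subseteq> mclass (vmap of_int b) (vmap of_int \<beta>)"
  proof
    fix p assume "p \<in> ext_marking (mclass b \<beta>)"
    then obtain u v s t where p: "p = ((u * of_int s) *s vmap of_int b, (v * of_int t) *s vmap of_int \<beta>)"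
      and "u * v = 1" "s * t = 1"
      unfolding ext_marking_def mclass_def by (auto simp: of_int_hom.vmap_scale vector_smult_assoc)
    then have "(u * of_int s) * (v * of_int t) = (1::z2)" by (metis mult.commute mult.left_commute mult_1 of_int_1 of_int_mult)
    with p show "p \<in> mclass (vmap of_int b) (vmap of_int \<beta>)" unfolding mclass_def by blast
  qed
  have "(b, \<beta>) \<in> mclass b \<beta>" unfolding mclass_def by (auto intro: exI[of _ 1])
  then show "mclass (vmap of_int b) (vmap of_int \<beta>) \<subseteq> ext_marking (mclass b \<beta>)"
    unfolding ext_marking_def mclass_def by blast
qed

definition int_points :: "((z2^'n) \<times> (z2^'n)) set \<Rightarrow> ((int^'n) \<times> (int^'n)) set" where
  "int_points S = {(x, \<xi>). (vmap of_int x, vmap of_int \<xi>) \<in> S}"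

(* The normalisation \<beta>(b) = -2 forces a unit that rescales an integral marking into an
   integral marking to be 1 or -1. *)
lemma int_points_mclass:
  fixes b \<beta> :: "int^'n" assumes fb: "fdot \<beta> b = -2"
  shows "int_points (mclass (vmap of_int b) (vmap of_int \<beta>)) = mclass b \<beta>"
proof
  show "mclass b \<beta> \<subseteq> int_points (mclass (vmap of_int b) (vmap of_int \<beta>))"
    unfolding int_points_def mclass_def
    by (auto simp: of_int_hom.vmap_scale) (metis of_int_1 of_int_mult)
  show "int_points (mclass (vmap of_int b) (vmap of_int \<beta>)) \<subseteq> mclass b \<beta>"
  proof (clarify)
    fix x \<xi> assume "(x, \<xi>) \<in> int_points (mclass (vmap of_int b) (vmap of_int \<beta>))"
    then obtain u u' :: z2 where uu': "u * u' = 1"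
      and x: "vmap of_int x = u *s vmap of_int b" and \<xi>: "vmap of_int \<xi> = u' *s vmap of_int \<beta>"
      unfolding int_points_def mclass_def by blast
    have "2 * (- u) = of_int (fdot \<beta> x)" "2 * (- u') = of_int (fdot \<xi> b)"
      using fb by (simp_all add: of_int_hom.hom_fdot x \<xi> fdot_scale_right fdot_scale_left
          of_int_hom.hom_fdot[symmetric])
    then have "- u = 1 \<or> - u = -1" using uu' z2_unit_of_even_ints[of "- u" "- u'"] by simp
    then have "u = 1 \<and> u' = 1 \<or> u = -1 \<and> u' = -1" using uu' by (auto simp: minus_equation_iff)
    then have "\<exists>s::int. s * s = 1 \<and> u = of_int s \<and> u' = of_int s"
      by (elim disjE) (intro exI[of _ 1], simp, intro exI[of _ "-1"], simp)
    then obtain s :: int where "s * s = 1" "u = of_int s" "u' = of_int s" by blast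
    then have "vmap of_int x = vmap (of_int :: int \<Rightarrow> z2) (s *s b)"
      "vmap of_int \<xi> = vmap (of_int :: int \<Rightarrow> z2) (s *s \<beta>)"
      using x \<xi> by (simp_all add: of_int_hom.vmap_scale)
    then have "x = s *s b" "\<xi> = s *s \<beta>" using vmap_inj[OF inj_of_int_z2] by blast+
    then show "(x, \<xi>) \<in> mclass b \<beta>" unfolding mclass_def using \<open>s * s = 1\<close> by blast
  qed
qed

lemma mem_conj_marking_iff:
  fixes X :: "'a::comm_ring_1^'n^'n" assumes X: "invertible X"
  shows "(x, \<xi>) \<in> conj_marking X S \<longleftrightarrow> (matrix_inv X *v x, \<xi> v* X) \<in> S"
proof
  assume "(x, \<xi>) \<in> conj_marking X S"
  then show "(matrix_inv X *v x, \<xi> v* X) \<in> S"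
    unfolding conj_marking_def
    by (auto simp: matrix_vector_mul_assoc vector_matrix_mul_assoc matrix_inv_left[OF X] matrix_inv_right[OF X])
next
  assume "(matrix_inv X *v x, \<xi> v* X) \<in> S"
  moreover have "(x, \<xi>) = (X *v (matrix_inv X *v x), (\<xi> v* X) v* matrix_inv X)"
    by (simp add: matrix_vector_mul_assoc vector_matrix_mul_assoc matrix_inv_left[OF X] matrix_inv_right[OF X])
  ultimately show "(x, \<xi>) \<in> conj_marking X S" unfolding conj_marking_def by force
qed

lemma int_points_conj_marking:
  fixes V :: "int^'n^'n" assumes V: "invertible V"
  shows "int_points (conj_marking (map_matrix of_int V) S) = conj_marking V (int_points S)"
proof -
  have "(x, \<xi>) \<in> int_points (conj_marking (map_matrix of_int V) S) \<longleftrightarrow>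
      (x, \<xi>) \<in> conj_marking V (int_points S)" for x \<xi>
    by (simp add: int_points_def mem_conj_marking_iff V of_int_hom.map_matrix_inverse[OF V]
        of_int_hom.vmap_matrix_vector_mult of_int_hom.vmap_vector_matrix_mult)
  then show ?thesis by auto
qed

section \<open>The integral reflection group\<close>

lemma z2_reflection_marking:
  assumes "z2_reflection s" and "marking_of s C"
  obtains b \<beta> where "s = mat 1 + outer b \<beta>" "fdot \<beta> b = -2" "C = mclass b \<beta>"
proof -
  obtain b \<beta> where s: "s = mat 1 + outer b \<beta>" and C: "C = mclass b \<beta>"
    using assms(2) unfolding marking_of_def is_marking_iff_outer by blast
  have "has_refl_marking (map_matrix embQ2 s)"
    using assms(1) unfolding z2_reflection_def by (simp add: refl_conj_imp_has_refl_marking)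
  moreover have "map_matrix embQ2 s = mat 1 + outer (vmap embQ2 b) (vmap embQ2 \<beta>)"
    unfolding s by (simp add: embQ2_hom.map_matrix_add embQ2_hom.map_matrix_mat embQ2_hom.hom_1
        embQ2_hom.map_matrix_outer)
  ultimately have "fdot (vmap embQ2 \<beta>) (vmap embQ2 b) = -2" by (rule has_refl_marking_coeff) simp
  then have "embQ2 (fdot \<beta> b) = embQ2 (-2)"
    by (simp add: embQ2_hom.hom_fdot embQ2_hom.hom_uminus embQ2_hom.hom_numeral)
  then have "fdot \<beta> b = -2" using inj_embQ2 by (simp add: inj_eq)
  from s this C show ?thesis by (rule that)
qed

lemma gen_grp_subset:
  assumes "mat 1 \<in> G" "\<And>x y. x \<in> G \<Longrightarrow> y \<in> G \<Longrightarrow> x ** y \<in> G"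
    "\<And>x. x \<in> G \<Longrightarrow> matrix_inv x \<in> G" "S \<subseteq> G"
  shows "gen_grp S \<subseteq> G"
proof
  fix x assume "x \<in> gen_grp S"
  then show "x \<in> G" by induction (use assms in auto)
qed

locale integral_conjugate =
  fixes W :: "(z2^'n^'n) set" and mk :: "z2^'n^'n \<Rightarrow> ((z2^'n) \<times> (z2^'n)) set"
    and U Y :: "z2^'n^'n"
  assumes refl_group: "refl_group z2_reflection W" and marked: "is_marked z2_reflection W mk"
    and UY: "U ** Y = mat 1" and YU: "Y ** U = mat 1"
    and integral: "\<And>w. w \<in> W \<Longrightarrow> \<exists>C. map_matrix of_int C = U ** w ** Y"
begin

definition int_conj :: "z2^'n^'n \<Rightarrow> int^'n^'n" where
  "int_conj w = (SOME C. map_matrix of_int C = U ** w ** Y)"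

lemma map_int_conj: "w \<in> W \<Longrightarrow> map_matrix of_int (int_conj w) = U ** w ** Y"
  unfolding int_conj_def using integral by (rule someI_ex)

lemma int_conj_eqI: "w \<in> W \<Longrightarrow> map_matrix of_int C = U ** w ** Y \<Longrightarrow> int_conj w = C"
  using map_int_conj map_matrix_inj[OF inj_of_int_z2] by metis

lemma W_one: "mat 1 \<in> W" and W_mult: "x \<in> W \<Longrightarrow> y \<in> W \<Longrightarrow> x ** y \<in> W"
  and W_matrix_inv: "x \<in> W \<Longrightarrow> matrix_inv x \<in> W" and W_invertible: "x \<in> W \<Longrightarrow> invertible x"
  using refl_group unfolding refl_group_def by auto

lemma invertible_U: "invertible U" and matrix_inv_U: "matrix_inv U = Y"
  using invertibleI[OF UY YU] matrix_inv_unique[OF UY YU] .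

lemma int_conj_one: "int_conj (mat 1) = mat 1"
  by (rule int_conj_eqI[OF W_one]) (simp add: of_int_hom.map_matrix_mat UY)

lemma int_conj_mult: "x \<in> W \<Longrightarrow> y \<in> W \<Longrightarrow> int_conj (x ** y) = int_conj x ** int_conj y"
  by (rule int_conj_eqI[OF W_mult]) (simp_all add: of_int_hom.map_matrix_mult map_int_conj conj_mult_conj[OF YU])

lemma int_conj_inverse:
  assumes "x \<in> W"
  shows "invertible (int_conj x)" "matrix_inv (int_conj x) = int_conj (matrix_inv x)"
proof -
  have "int_conj x ** int_conj (matrix_inv x) = mat 1" "int_conj (matrix_inv x) ** int_conj x = mat 1"
    using int_conj_mult[OF assms W_matrix_inv[OF assms]] int_conj_mult[OF W_matrix_inv[OF assms] assms]
    by (simp_all add: matrix_inv_left matrix_inv_right W_invertible[OF assms] int_conj_one)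
  then show "invertible (int_conj x)" "matrix_inv (int_conj x) = int_conj (matrix_inv x)"
    by (auto intro: invertibleI matrix_inv_unique)
qed

lemma int_conj_conj: "w \<in> W \<Longrightarrow> Y ** map_matrix of_int (int_conj w) ** U = w"
  by (simp add: map_int_conj matrix_mul_assoc) (simp add: matrix_mul_assoc[symmetric] YU)

lemma int_conj_marking:
  assumes sW: "s \<in> W" and sr: "z2_reflection s"
  obtains b \<beta> where "int_conj s = mat 1 + outer b \<beta>" "fdot \<beta> b = -2"
    "conj_marking U (mk s) = mclass (vmap of_int b) (vmap of_int \<beta>)"
proof -
  have "marking_of s (mk s)" using marked sW sr unfolding is_marked_def by blast
  with sr obtain b0 \<beta>0 where s: "s = mat 1 + outer b0 \<beta>0" and fb0: "fdot \<beta>0 b0 = -2"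
    and mk: "mk s = mclass b0 \<beta>0"
    by (rule z2_reflection_marking)
  have C: "map_matrix of_int (int_conj s - mat 1) = outer (U *v b0) (\<beta>0 v* Y)"
    using map_int_conj[OF sW] conj_outer[OF UY, of b0 \<beta>0]
    by (simp add: s of_int_hom.map_matrix_diff of_int_hom.map_matrix_mat)
  have fb: "fdot (\<beta>0 v* Y) (U *v b0) = -2"
    by (simp add: fdot_vector_matrix_mult matrix_vector_mul_assoc YU fb0)
  then have "U *v b0 \<noteq> 0" "\<beta>0 v* Y \<noteq> 0" by auto
  with C obtain u u' b \<beta> where u: "u * u' = 1"
    and b: "U *v b0 = u *s vmap of_int b" and \<beta>: "\<beta>0 v* Y = u' *s vmap of_int \<beta>"
    by (rule integral_outer_factor)
  have "map_matrix of_int (int_conj s) = map_matrix of_int (int_conj s - mat 1) + (mat 1 :: z2^'n^'n)"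
    by (simp add: of_int_hom.map_matrix_diff of_int_hom.map_matrix_mat)
  also have "\<dots> = map_matrix of_int (mat 1 + outer b \<beta>)"
    using C unfolding b \<beta> outer_scale_units[OF u]
    by (simp add: of_int_hom.map_matrix_add of_int_hom.map_matrix_mat of_int_hom.map_matrix_outer add.commute)
  finally have s': "int_conj s = mat 1 + outer b \<beta>" by (rule map_matrix_inj[OF inj_of_int_z2])
  have "(of_int (fdot \<beta> b) :: z2) = (u * u') * fdot (vmap of_int \<beta>) (vmap of_int b)"
    using u by (simp add: of_int_hom.hom_fdot)
  also have "\<dots> = fdot (\<beta>0 v* Y) (U *v b0)"
    unfolding b \<beta> by (simp add: fdot_scale_left fdot_scale_right mult_ac)
  finally have "(of_int (fdot \<beta> b) :: z2) = of_int (-2)" using fb by simp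
  then have fb': "fdot \<beta> b = -2" by (simp only: of_int_eq_iff)
  have "conj_marking U (mk s) = mclass (vmap of_int b) (vmap of_int \<beta>)"
    unfolding mk conj_marking_mclass matrix_inv_U b \<beta> mclass_scale_units[OF u] ..
  with s' fb' show ?thesis by (rule that)
qed

lemma int_reflection_int_conj:
  assumes "s \<in> W" "z2_reflection s" shows "int_reflection (int_conj s)"
proof -
  obtain b \<beta> where "int_conj s = mat 1 + outer b \<beta>" "fdot \<beta> b = -2"
    using assms by (rule int_conj_marking)
  then have "has_refl_marking (int_conj s)" unfolding has_refl_marking_def by blast
  then have "refl_conj (map_matrix (of_int :: int \<Rightarrow> rat) (int_conj s))"
    by (simp add: of_int_hom.has_refl_marking_map_matrix has_refl_marking_imp_refl_conj)
  then show ?thesis unfolding int_reflection_def using int_conj_inverse(1)[OF assms(1)] by blast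
qed

lemma z2_reflection_of_int_reflection:
  assumes sW: "s \<in> W" and "int_reflection (int_conj s)" shows "z2_reflection s"
proof -
  let ?J = "map_matrix embQ2"
  have JJ: "?J Y ** ?J U = mat 1" "?J U ** ?J Y = mat 1"
    using YU UY by (simp_all add: embQ2_hom.map_matrix_mult[symmetric] embQ2_hom.map_matrix_mat embQ2_hom.hom_1)
  have "has_refl_marking (map_matrix (of_int :: int \<Rightarrow> rat) (int_conj s))"
    using assms(2) unfolding int_reflection_def by (simp add: refl_conj_imp_has_refl_marking)
  then have "has_refl_marking (map_matrix of_rat (map_matrix (of_int :: int \<Rightarrow> rat) (int_conj s)) :: q2^'n^'n)"
    by (rule of_rat_hom.has_refl_marking_map_matrix)
  moreover have "map_matrix of_rat (map_matrix (of_int :: int \<Rightarrow> rat) (int_conj s)) = ?J U ** ?J s ** ?J Y"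
    by (simp add: map_int_conj[OF sW, symmetric] embQ2_hom.map_matrix_mult[symmetric] vec_eq_iff embQ2_of_int)
  ultimately have "has_refl_marking (?J Y ** (?J U ** ?J s ** ?J Y) ** matrix_inv (?J Y))"
    using has_refl_marking_conj invertibleI[OF JJ] by simp
  moreover have "?J Y ** (?J U ** ?J s ** ?J Y) ** ?J U = (?J Y ** ?J U) ** ?J s ** (?J Y ** ?J U)"
    by (simp only: matrix_mul_assoc)
  ultimately have "has_refl_marking (?J s)" using JJ matrix_inv_unique[OF JJ] by simp
  then show ?thesis
    unfolding z2_reflection_def using W_invertible[OF sW] by (simp add: has_refl_marking_imp_refl_conj)
qed

definition W_int :: "(int^'n^'n) set" where
  "W_int = int_conj ` W"

definition mk_int :: "int^'n^'n \<Rightarrow> ((int^'n) \<times> (int^'n)) set" where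
  "mk_int C = int_points (conj_marking U (mk (Y ** map_matrix of_int C ** U)))"

lemma mk_int_int_conj:
  assumes "s \<in> W" "z2_reflection s"
  obtains b \<beta> where "int_conj s = mat 1 + outer b \<beta>" "mk_int (int_conj s) = mclass b \<beta>"
    "conj_marking U (mk s) = ext_marking (mclass b \<beta>)"
proof -
  obtain b \<beta> where "int_conj s = mat 1 + outer b \<beta>" "fdot \<beta> b = -2"
    and mk: "conj_marking U (mk s) = mclass (vmap of_int b) (vmap of_int \<beta>)"
    using assms by (rule int_conj_marking)
  moreover from this have "mk_int (int_conj s) = mclass b \<beta>"
    unfolding mk_int_def int_conj_conj[OF assms(1)] by (simp add: int_points_mclass)
  ultimately show ?thesis using that ext_marking_mclass by metis
qed

lemma refl_group_W_int: "refl_group int_reflection W_int"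
proof -
  have one: "mat 1 \<in> W_int" unfolding W_int_def using int_conj_one W_one by force
  have mult: "x ** y \<in> W_int" if "x \<in> W_int" "y \<in> W_int" for x y
    using that W_mult int_conj_mult unfolding W_int_def by force
  have inv: "matrix_inv x \<in> W_int" if "x \<in> W_int" for x
    using that W_matrix_inv int_conj_inverse(2) unfolding W_int_def by force
  have "int_conj x \<in> gen_grp {s \<in> W_int. int_reflection s}"
    if "x \<in> gen_grp {s \<in> W. z2_reflection s}" for x
    using that
  proof induction
    case gen_one
    show ?case using int_conj_one gen_grp.gen_one by metis
  next
    case (gen_base s)
    then show ?case by (auto intro!: gen_grp.gen_base simp: W_int_def int_reflection_int_conj)
  next
    case (gen_mult x y)
    then have "x \<in> W" "y \<in> W" using refl_group unfolding refl_group_def by blast+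
    then show ?case using gen_grp.gen_mult[OF gen_mult.IH] int_conj_mult by simp
  next
    case (gen_inv x)
    then have "x \<in> W" using refl_group unfolding refl_group_def by blast
    then show ?case using gen_grp.gen_inv[OF gen_inv.IH] int_conj_inverse by simp
  qed
  then have "W_int \<subseteq> gen_grp {s \<in> W_int. int_reflection s}"
    using refl_group unfolding refl_group_def W_int_def by blast
  moreover have "gen_grp {s \<in> W_int. int_reflection s} \<subseteq> W_int"
    using one mult inv by (intro gen_grp_subset) auto
  ultimately show ?thesis
    using refl_group one mult inv int_conj_inverse(1)
    unfolding refl_group_def W_int_def by auto
qed

lemma is_marked_W_int: "is_marked int_reflection W_int mk_int"
proof -
  have "marking_of C (mk_int C)" if C: "C \<in> W_int" "int_reflection C" for C
  proof -
    obtain s where s: "s \<in> W" "C = int_conj s" using C(1) unfolding W_int_def by blast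
    with C(2) have "z2_reflection s" using z2_reflection_of_int_reflection by blast
    with s show ?thesis
      by (metis mk_int_int_conj is_marking_iff_outer marking_of_def)
  qed
  moreover have "conj_marking w (mk_int C) = mk_int (w ** C ** matrix_inv w)"
    if wC: "w \<in> W_int" "C \<in> W_int" "int_reflection C" for w C
  proof -
    obtain x s where x: "x \<in> W" "w = int_conj x" and s: "s \<in> W" "C = int_conj s"
      using wC(1,2) unfolding W_int_def by blast
    have xsx: "x ** s ** matrix_inv x \<in> W" using x s W_mult W_matrix_inv by blast
    have "z2_reflection s" using s wC(3) z2_reflection_of_int_reflection by blast
    then have mk: "mk (x ** s ** matrix_inv x) = conj_marking x (mk s)"
      using marked x(1) s(1) unfolding is_marked_def conj_marking_def by auto
    have w: "invertible (map_matrix of_int w :: z2^'n^'n)"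
      unfolding x(2) by (rule of_int_hom.map_matrix_inverse(1)[OF int_conj_inverse(1)[OF x(1)]])
    have wU: "map_matrix of_int w ** U = U ** x"
      unfolding x(2) map_int_conj[OF x(1)] by (simp add: matrix_mul_assoc[symmetric] YU)
    have "conj_marking w (mk_int C) = conj_marking w (int_points (conj_marking U (mk s)))"
      unfolding mk_int_def s(2) int_conj_conj[OF s(1)] ..
    also have "\<dots> = int_points (conj_marking (map_matrix of_int w) (conj_marking U (mk s)))"
      unfolding x(2) by (rule int_points_conj_marking[OF int_conj_inverse(1)[OF x(1)], symmetric])
    also have "\<dots> = int_points (conj_marking U (conj_marking x (mk s)))"
      using wU by (simp add: conj_marking_mult w invertible_U W_invertible[OF x(1)])
    also have "\<dots> = mk_int (w ** C ** matrix_inv w)"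
    proof -
      have "w ** C ** matrix_inv w = int_conj (x ** s ** matrix_inv x)"
        unfolding x(2) s(2) int_conj_inverse(2)[OF x(1)]
        using x(1) s(1) by (simp add: int_conj_mult W_mult W_matrix_inv)
      then show ?thesis by (simp add: mk_int_def int_conj_conj[OF xsx] mk)
    qed
    finally show ?thesis .
  qed
  ultimately show ?thesis unfolding is_marked_def conj_marking_def by blast
qed

theorem coxeter_type: "coxeter_type W mk"
proof -
  have "(\<lambda>w. U ** w ** matrix_inv U) ` W = map_matrix of_int ` W_int"
    unfolding W_int_def matrix_inv_U image_image using map_int_conj by auto
  moreover have "conj_marking U (mk s) = ext_marking (mk_int s')"
    if "s \<in> W" "z2_reflection s" "map_matrix of_int s' = U ** s ** matrix_inv U" for s s'
  proof -
    have "s' = int_conj s" using that(1,3) int_conj_eqI matrix_inv_U by metis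
    then show ?thesis using mk_int_int_conj[OF that(1,2)] by metis
  qed
  ultimately show ?thesis
    unfolding coxeter_type_def conj_marking_def
    using refl_group_W_int is_marked_W_int invertible_U by blast
qed

end

theorem lemma7p6:
  fixes W :: "(z2^'n^'n) set"
    and mk :: "z2^'n^'n \<Rightarrow> ((z2^'n) \<times> (z2^'n)) set"
  assumes "refl_group z2_reflection W"
    and "is_marked z2_reflection W mk"
    and "rationally_coxeter W"
  shows "coxeter_type W mk"
proof -
  obtain W' :: "(int^'n^'n) set" and P :: "q2^'n^'n" where P: "invertible P"
    and img: "(\<lambda>w. P ** map_matrix embQ2 w ** matrix_inv P) ` W = map_matrix (\<lambda>k. embQ2 (of_int k)) ` W'"
    using assms(3) unfolding rationally_coxeter_def by blast
  have integral: "\<exists>C. P ** map_matrix embQ2 w ** matrix_inv P = map_matrix of_int C" if "w \<in> W" for w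
  proof -
    obtain C where "P ** map_matrix embQ2 w ** matrix_inv P = map_matrix (\<lambda>k. embQ2 (of_int k)) C"
      using img \<open>w \<in> W\<close> by blast
    then show ?thesis by (auto simp: embQ2_of_int)
  qed
  obtain U Y :: "z2^'n^'n" where "U ** Y = mat 1" "Y ** U = mat 1"
    "\<And>w. w \<in> W \<Longrightarrow> \<exists>C. map_matrix of_int C = U ** w ** Y"
    using z2_conj_integral_of_q2_conj_integral[OF P integral] by blast
  then interpret integral_conjugate W mk U Y
    using assms(1,2) by unfold_locales
  show ?thesis by (rule coxeter_type)
qed

end
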